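(* Fix $\theta\in\Theta_{\mathrm{reg}}$ and let $\hat\theta_n$ be an estimator with $\Delta_n:=\hat\theta_n-\theta=n^{-1/2}A_n(\theta)+n^{-1}B_n(\theta)+o_p(n^{-1})$, where $A_n,B_n=O_p(1)$. Assume the perturbative score expansion \[ 0=U_i(\theta)+(\nabla^2\ell)_{ij}(\theta)\Delta_n^j+\tfrac12(\nabla^3\ell)_{ijk}(\theta)\Delta_n^j\Delta_n^k+r_{i,n},\qquad r_{i,n}=o_p(n^{-1/2}), \] and the next-order control $A_n^a=g^{ai}(\theta)U_i(\theta)/\sqrt n+o_p(n^{-1/2})$. Then \[ B_{i,n}(\theta):=g_{ij}(\theta)B_n^j(\theta)=H_{ij,n}(\theta)A_n^j(\theta)+\tfrac12K_{ijk,n}(\theta)A_n^j(\theta)A_n^k(\theta)+o_p(1), \] where $H_{ij,n}=n^{-1/2}((\nabla^2\ell)_{ij}+ng_{ij})$ and $K_{ijk,n}=n^{-1}(\nabla^3\ell)_{ijk}$.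
   Context: $\{p_\theta:\theta\in\Theta\subset\mathbb{R}^d\}$ is a family of positive densities w.r.t. a $\sigma$-finite measure, $C^3$ in $\theta$ with the usual regularity permitting differentiation under the integral, and $X_1,\dots,X_n$ are i.i.d. from $p_\theta$. $g_{ij}=I_{ij}$ is the Fisher information (Fisher–Rao metric), $g^{ij}$ its inverse, $\Gamma^k_{ij}$ its Levi-Civita Christoffel symbols, $\Theta_{\mathrm{reg}}=\{\theta:\lambda_{\min}(I(\theta))>0\}$. $\ell(\theta)=\sum_t\log p_\theta(X_t)$, $U_i=\partial_i\ell$, $(\nabla^2\ell)_{ij}=\partial_i\partial_j\ell-\Gamma^k_{ij}U_k$ (covariant Hessian), $(\nabla^3\ell)_{ijk}$ the third covariant derivative. The standing moment assumptions hold: $\sup_{\vartheta}\mathbb{E}_\vartheta[(\partial_{ij}\log p_\vartheta)^2]<\infty$ and $\sup_\vartheta\mathbb{E}_\vartheta|\partial_{ijk}\log p_\vartheta|<\infty$ on a compact neighborhood of $\theta$ in $\Theta_{\mathrm{reg}}$. $O_p$, $o_p$ denote boundedness / convergence to zero in probability after normalization. Summation over repeated indices is implied. *)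

theory Defs
  imports "HOL-Probability.Probability"
begin

definition partial :: "'d::finite \<Rightarrow> (real^'d \<Rightarrow> real) \<Rightarrow> real^'d \<Rightarrow> real" where
  "partial i f v = deriv (\<lambda>t. f (v + t *\<^sub>R axis i 1)) 0"

definition has_partial :: "'d::finite \<Rightarrow> (real^'d \<Rightarrow> real) \<Rightarrow> real^'d \<Rightarrow> bool" where
  "has_partial i f v \<longleftrightarrow> (\<lambda>t. f (v + t *\<^sub>R axis i 1)) differentiable (at 0)"

fun Ck_on :: "nat \<Rightarrow> (real^'d::finite) set \<Rightarrow> (real^'d \<Rightarrow> real) \<Rightarrow> bool" where
  "Ck_on 0 S f = continuous_on S f"
| "Ck_on (Suc k) S f =
     (continuous_on S f \<and> (\<forall>i. \<forall>v\<in>S. has_partial i f v) \<and> (\<forall>i. Ck_on k S (partial i f)))"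

definition lambda_min :: "real^'d^'d \<Rightarrow> real" where
  "lambda_min G = (INF v\<in>{v::real^'d. norm v = 1}. v \<bullet> (G *v v))"

definition logp :: "(real^'d::finite \<Rightarrow> 'a \<Rightarrow> real) \<Rightarrow> 'a \<Rightarrow> real^'d \<Rightarrow> real" where
  "logp p x = (\<lambda>v. ln (p v x))"

definition fisher :: "'a measure \<Rightarrow> (real^'d::finite \<Rightarrow> 'a \<Rightarrow> real) \<Rightarrow> real^'d \<Rightarrow> real^'d^'d" where
  "fisher M p v = (\<chi> i j. \<integral>x. partial i (logp p x) v * partial j (logp p x) v * p v x \<partial>M)"

definition fisher_inv :: "'a measure \<Rightarrow> (real^'d::finite \<Rightarrow> 'a \<Rightarrow> real) \<Rightarrow> real^'d \<Rightarrow> real^'d^'d" where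
  "fisher_inv M p v = matrix_inv (fisher M p v)"

definition christoffel :: "'a measure \<Rightarrow> (real^'d::finite \<Rightarrow> 'a \<Rightarrow> real) \<Rightarrow> 'd \<Rightarrow> 'd \<Rightarrow> 'd \<Rightarrow> real^'d \<Rightarrow> real" where
  "christoffel M p k i j v = (1/2) * (\<Sum>l\<in>UNIV. fisher_inv M p v $ k $ l *
      (partial i (\<lambda>w. fisher M p w $ j $ l) v + partial j (\<lambda>w. fisher M p w $ i $ l) v
       - partial l (\<lambda>w. fisher M p w $ i $ j) v))"

definition Theta_reg :: "'a measure \<Rightarrow> (real^'d::finite \<Rightarrow> 'a \<Rightarrow> real) \<Rightarrow> (real^'d) set \<Rightarrow> (real^'d) set" where
  "Theta_reg M p \<Theta> = {v\<in>\<Theta>. lambda_min (fisher M p v) > 0}"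

definition covHess :: "'a measure \<Rightarrow> (real^'d::finite \<Rightarrow> 'a \<Rightarrow> real) \<Rightarrow> (real^'d \<Rightarrow> real)
    \<Rightarrow> 'd \<Rightarrow> 'd \<Rightarrow> real^'d \<Rightarrow> real" where
  "covHess M p L i j v = partial i (partial j L) v - (\<Sum>k\<in>UNIV. christoffel M p k i j v * partial k L v)"

definition cov3 :: "'a measure \<Rightarrow> (real^'d::finite \<Rightarrow> 'a \<Rightarrow> real) \<Rightarrow> (real^'d \<Rightarrow> real)
    \<Rightarrow> 'd \<Rightarrow> 'd \<Rightarrow> 'd \<Rightarrow> real^'d \<Rightarrow> real" where
  "cov3 M p L i j k v = partial k (covHess M p L i j) v
     - (\<Sum>m\<in>UNIV. christoffel M p m k i v * covHess M p L m j v)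
     - (\<Sum>m\<in>UNIV. christoffel M p m k j v * covHess M p L i m v)"

text \<open>Positive densities w.r.t. a sigma-finite measure, C^3 in the parameter, on an open
  parameter set, with the usual regularity permitting differentiation under the integral
  (of int p = 1, twice), finite Fisher information, and a C^2 Fisher metric.\<close>
definition stat_model :: "'a measure \<Rightarrow> (real^'d::finite \<Rightarrow> 'a \<Rightarrow> real) \<Rightarrow> (real^'d) set \<Rightarrow> bool" where
  "stat_model M p \<Theta> \<longleftrightarrow>
     sigma_finite_measure M \<and> open \<Theta> \<and>
     (\<forall>v\<in>\<Theta>. p v \<in> borel_measurable M \<and> (\<forall>x\<in>space M. p v x > 0)
        \<and> (\<integral>\<^sup>+ x. ennreal (p v x) \<partial>M) = 1) \<and>
     (\<forall>x\<in>space M. Ck_on 3 \<Theta> (logp p x)) \<and>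
     (\<forall>v\<in>\<Theta>. \<forall>i j.
        integrable M (\<lambda>x. (partial i (logp p x) v)\<^sup>2 * p v x) \<and>
        integrable M (\<lambda>x. partial i (\<lambda>w. p w x) v) \<and>
        (\<integral>x. partial i (\<lambda>w. p w x) v \<partial>M) = 0 \<and>
        integrable M (\<lambda>x. partial i (partial j (\<lambda>w. p w x)) v) \<and>
        (\<integral>x. partial i (partial j (\<lambda>w. p w x)) v \<partial>M) = 0) \<and>
     (\<forall>i j. Ck_on 2 \<Theta> (\<lambda>v. fisher M p v $ i $ j))"

definition moment_conditions :: "'a measure \<Rightarrow> (real^'d::finite \<Rightarrow> 'a \<Rightarrow> real) \<Rightarrow> (real^'d) set
    \<Rightarrow> real^'d \<Rightarrow> bool" where
  "moment_conditions M p \<Theta> \<theta> \<longleftrightarrow>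
     (\<exists>N. compact N \<and> \<theta> \<in> interior N \<and> N \<subseteq> Theta_reg M p \<Theta> \<and>
        (\<forall>i j. (SUP v\<in>N. \<integral>\<^sup>+ x. ennreal ((partial i (partial j (logp p x)) v)\<^sup>2 * p v x) \<partial>M) < \<infinity>) \<and>
        (\<forall>i j k. (SUP v\<in>N. \<integral>\<^sup>+ x. ennreal (\<bar>partial i (partial j (partial k (logp p x))) v\<bar> * p v x) \<partial>M) < \<infinity>))"

definition loglik :: "(real^'d::finite \<Rightarrow> 'a \<Rightarrow> real) \<Rightarrow> (nat \<Rightarrow> 'w \<Rightarrow> 'a) \<Rightarrow> nat \<Rightarrow> 'w \<Rightarrow> real^'d \<Rightarrow> real" where
  "loglik p X n \<omega> = (\<lambda>v. \<Sum>t<n. ln (p v (X t \<omega>)))"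

definition o_p :: "'w measure \<Rightarrow> (nat \<Rightarrow> 'w \<Rightarrow> 'b::real_normed_vector) \<Rightarrow> (nat \<Rightarrow> real) \<Rightarrow> bool" where
  "o_p P Y r \<longleftrightarrow> (\<forall>\<epsilon>>0. (\<lambda>n. measure P {\<omega>\<in>space P. \<epsilon> * r n < norm (Y n \<omega>)}) \<longlonglongrightarrow> 0)"

definition O_p1 :: "'w measure \<Rightarrow> (nat \<Rightarrow> 'w \<Rightarrow> 'b::real_normed_vector) \<Rightarrow> bool" where
  "O_p1 P Y \<longleftrightarrow> (\<forall>\<epsilon>>0. \<exists>C. \<forall>\<^sub>F n in sequentially. measure P {\<omega>\<in>space P. C < norm (Y n \<omega>)} < \<epsilon>)"

end

(*
  Insert Delta = A/sqrt n + B/n + o_p(1/n) into the score expansion. The control of A gives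
  sqrt n g A = U + o_p(1), so the score cancels against the leading term of the Hessian part and
  what is left at order one is g B - H A - K A A/2 plus terms that each pair an o_p(1) factor with
  an O_p(1) one. Besides the hypotheses, this only needs two facts about the random coefficients:
  (1/n) nabla^2 l + g -> 0 in probability, by Chebyshev's weak law applied to the i.i.d. summands
  (using E[score] = 0, the second Bartlett identity E[d_i d_j log p] = -g_ij and the square
  integrability from the moment conditions), and (1/n) nabla^3 l = O_p(1), by Markov's inequality.
  The Christoffel symbols are evaluated at theta and enter only as constant coefficients.
*)
theory Submission
  imports Defs
begin

lemma has_partial_DERIV:
  "has_partial i f v \<Longrightarrow> ((\<lambda>t. f (v + t *\<^sub>R axis i 1)) has_real_derivative partial i f v) (at 0)"
  unfolding has_partial_def partial_def by (simp add: DERIV_deriv_iff_real_differentiable)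

lemma DERIV_imp_has_partial:
  assumes "((\<lambda>t. f (v + t *\<^sub>R axis i 1)) has_real_derivative D) (at 0)"
  shows "has_partial i f v" "partial i f v = D"
  using assms unfolding has_partial_def partial_def
  by (auto simp: DERIV_imp_deriv real_differentiable_def)

lemma has_partial_const: "has_partial i (\<lambda>w. c) v" "partial i (\<lambda>w. c) v = 0"
  by (auto intro: DERIV_imp_has_partial DERIV_const)

lemma has_partial_add:
  assumes "has_partial i f v" "has_partial i g v"
  shows "has_partial i (\<lambda>w. f w + g w) v"
    "partial i (\<lambda>w. f w + g w) v = partial i f v + partial i g v"
  using DERIV_add[OF assms[THEN has_partial_DERIV]] by (auto intro: DERIV_imp_has_partial)

lemma has_partial_diff:
  assumes "has_partial i f v" "has_partial i g v"
  shows "has_partial i (\<lambda>w. f w - g w) v"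
    "partial i (\<lambda>w. f w - g w) v = partial i f v - partial i g v"
  using DERIV_diff[OF assms[THEN has_partial_DERIV]] by (auto intro: DERIV_imp_has_partial)

lemma has_partial_mult:
  assumes "has_partial i f v" "has_partial i g v"
  shows "has_partial i (\<lambda>w. f w * g w) v"
    "partial i (\<lambda>w. f w * g w) v = partial i f v * g v + f v * partial i g v"
  using DERIV_mult[OF assms[THEN has_partial_DERIV]]
  by (auto intro: DERIV_imp_has_partial simp: mult.commute)

lemma has_partial_cmult:
  assumes "has_partial i f v"
  shows "has_partial i (\<lambda>w. c * f w) v" "partial i (\<lambda>w. c * f w) v = c * partial i f v"
  using DERIV_cmult[OF has_partial_DERIV[OF assms], of c] by (auto intro: DERIV_imp_has_partial)

lemma has_partial_divide:
  assumes "has_partial i f v" "has_partial i g v" "g v \<noteq> 0"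
  shows "has_partial i (\<lambda>w. f w / g w) v"
  using DERIV_divide[OF assms(1,2)[THEN has_partial_DERIV]] assms(3)
  by (auto intro: DERIV_imp_has_partial)

lemma has_partial_exp:
  assumes "has_partial i f v"
  shows "has_partial i (\<lambda>w. exp (f w)) v" "partial i (\<lambda>w. exp (f w)) v = exp (f v) * partial i f v"
  using DERIV_fun_exp[OF has_partial_DERIV[OF assms]] by (auto intro: DERIV_imp_has_partial)

lemma has_partial_sum:
  assumes "finite T" "\<And>t. t \<in> T \<Longrightarrow> has_partial i (f t) v"
  shows "has_partial i (\<lambda>w. \<Sum>t\<in>T. f t w) v"
    "partial i (\<lambda>w. \<Sum>t\<in>T. f t w) v = (\<Sum>t\<in>T. partial i (f t) v)"
proof -
  have "((\<lambda>s. \<Sum>t\<in>T. f t (v + s *\<^sub>R axis i 1)) has_real_derivative (\<Sum>t\<in>T. partial i (f t) v)) (at 0)"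
    using assms by (intro DERIV_sum has_partial_DERIV) auto
  then show "has_partial i (\<lambda>w. \<Sum>t\<in>T. f t w) v"
    "partial i (\<lambda>w. \<Sum>t\<in>T. f t w) v = (\<Sum>t\<in>T. partial i (f t) v)"
    by (auto intro: DERIV_imp_has_partial)
qed

lemma has_partial_prod:
  assumes "finite T" "\<And>t. t \<in> T \<Longrightarrow> has_partial i (f t) v"
  shows "has_partial i (\<lambda>w. \<Prod>t\<in>T. f t w) v"
  using assms by (induction T rule: finite_induct) (auto intro: has_partial_const has_partial_mult)

lemma partial_cong_eventually:
  assumes "\<forall>\<^sub>F t in nhds 0. f (v + t *\<^sub>R axis i 1) = g (v + t *\<^sub>R axis i 1)"
  shows "partial i f v = partial i g v" "has_partial i f v \<longleftrightarrow> has_partial i g v"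
  unfolding partial_def has_partial_def real_differentiable_def
  using deriv_cong_ev[OF assms refl] DERIV_cong_ev[OF refl assms refl] by blast+

lemma partial_cong_open:
  assumes "open S" "v \<in> S" "\<And>w. w \<in> S \<Longrightarrow> f w = g w"
  shows "partial i f v = partial i g v" "has_partial i f v \<longleftrightarrow> has_partial i g v"
proof -
  have "isCont (\<lambda>t::real. v + t *\<^sub>R axis i 1) 0"
    by (intro continuous_intros)
  then have "\<forall>\<^sub>F t in nhds 0. v + t *\<^sub>R axis i 1 \<in> S"
    using assms(1,2) by (simp add: isCont_def tendsto_def eventually_nhds_conv_at)
  then have "\<forall>\<^sub>F t in nhds 0. f (v + t *\<^sub>R axis i 1) = g (v + t *\<^sub>R axis i 1)"
    by eventually_elim (use assms(3) in auto)
  then show "partial i f v = partial i g v" "has_partial i f v \<longleftrightarrow> has_partial i g v"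
    by (rule partial_cong_eventually)+
qed

lemma has_partial_eventually_nonzero:
  assumes "has_partial i f v" "f v \<noteq> 0"
  shows "\<forall>\<^sub>F t in nhds 0. f (v + t *\<^sub>R axis i 1) \<noteq> 0"
proof -
  have "((\<lambda>t. f (v + t *\<^sub>R axis i 1)) \<longlongrightarrow> f v) (at 0)"
    using DERIV_isCont[OF has_partial_DERIV[OF assms(1)]] by (simp add: isCont_def)
  then show ?thesis
    using tendsto_imp_eventually_ne assms(2) by (auto simp: eventually_nhds_conv_at)
qed

lemma Ck_on_3_has_partial:
  assumes "Ck_on 3 S f" "v \<in> S"
  shows "has_partial i f v" "has_partial i (partial j f) v" "has_partial i (partial j (partial k f)) v"
  using assms by (simp_all add: numeral_3_eq_3)

lemma Ck_on_2_has_partial: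
  assumes "Ck_on 2 S f" "v \<in> S"
  shows "has_partial i f v" "has_partial i (partial j f) v"
  using assms by (simp_all add: numeral_2_eq_2)

lemma has_partial_sum_open:
  assumes "open S" "v \<in> S" "finite T" "\<And>w. w \<in> S \<Longrightarrow> F w = (\<Sum>t\<in>T. G t w)"
    and "\<And>t. t \<in> T \<Longrightarrow> has_partial i (G t) v"
  shows "has_partial i F v" "partial i F v = (\<Sum>t\<in>T. partial i (G t) v)"
  using partial_cong_open[OF assms(1,2,4)] has_partial_sum[OF assms(3,5)] by auto

lemma partials_sum_Ck_on_3:
  assumes S: "open S" and T: "finite T" and C: "\<And>t. t \<in> T \<Longrightarrow> Ck_on 3 S (f t)" and v: "v \<in> S"
  defines "F \<equiv> \<lambda>w. \<Sum>t\<in>T. f t w"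
  shows "partial i F v = (\<Sum>t\<in>T. partial i (f t) v)"
    and "partial i (partial j F) v = (\<Sum>t\<in>T. partial i (partial j (f t)) v)"
    and "partial i (partial j (partial k F)) v = (\<Sum>t\<in>T. partial i (partial j (partial k (f t))) v)"
    and "has_partial i (partial j F) v"
    and "has_partial i (partial j (partial k F)) v"
proof -
  have d1: "partial j F w = (\<Sum>t\<in>T. partial j (f t) w)" if "w \<in> S" for j w
    unfolding F_def using has_partial_sum(2)[OF T Ck_on_3_has_partial(1)[OF C that]] .
  have d2: "partial j (partial k F) w = (\<Sum>t\<in>T. partial j (partial k (f t)) w)"
    and h2: "has_partial j (partial k F) w" if "w \<in> S" for j k w
    using has_partial_sum_open[OF S that T d1 Ck_on_3_has_partial(2)[OF C that]] by auto
  show "partial i F v = (\<Sum>t\<in>T. partial i (f t) v)"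
    and "partial i (partial j F) v = (\<Sum>t\<in>T. partial i (partial j (f t)) v)"
    and "has_partial i (partial j F) v"
    using d1 d2 h2 v by auto
  show "partial i (partial j (partial k F)) v = (\<Sum>t\<in>T. partial i (partial j (partial k (f t))) v)"
    and "has_partial i (partial j (partial k F)) v"
    using has_partial_sum_open[OF S v T d2 Ck_on_3_has_partial(3)[OF C v]] by auto
qed

lemma borel_measurable_partial:
  assumes S: "open S" and v: "v \<in> S"
    and meas: "\<And>w. w \<in> S \<Longrightarrow> (\<lambda>x. F w x) \<in> borel_measurable M"
    and hp: "\<And>x. x \<in> space M \<Longrightarrow> has_partial i (\<lambda>w. F w x) v"
  shows "(\<lambda>x. partial i (\<lambda>w. F w x) v) \<in> borel_measurable M"
proof -
  define h :: "nat \<Rightarrow> real" where "h m = 1 / real (Suc m)" for m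
  define u where "u m x = (if v + h m *\<^sub>R axis i 1 \<in> S
      then (F (v + h m *\<^sub>R axis i 1) x - F v x) / h m else 0)" for m x
  have h: "filterlim h (at 0) sequentially"
    unfolding h_def
    by (rule filterlim_atI) (use LIMSEQ_inverse_real_of_nat in \<open>auto simp: inverse_eq_divide\<close>)
  have "(\<lambda>m. v + h m *\<^sub>R axis i 1) \<longlonglongrightarrow> v + 0 *\<^sub>R axis i 1"
    using h by (intro tendsto_intros) (simp add: filterlim_at)
  then have ev: "\<forall>\<^sub>F m in sequentially. v + h m *\<^sub>R axis i 1 \<in> S"
    using S v topological_tendstoD by fastforce
  show ?thesis
  proof (rule borel_measurable_LIMSEQ_real[where u=u])
    show "u m \<in> borel_measurable M" for m
      unfolding u_def using meas v by (cases "v + h m *\<^sub>R axis i 1 \<in> S") auto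
  next
    fix x assume x: "x \<in> space M"
    have "((\<lambda>s. (F (v + s *\<^sub>R axis i 1) x - F v x) / s) \<longlongrightarrow> partial i (\<lambda>w. F w x) v) (at 0)"
      using has_partial_DERIV[OF hp[OF x]] by (simp add: DERIV_def)
    then have "(\<lambda>m. (F (v + h m *\<^sub>R axis i 1) x - F v x) / h m) \<longlonglongrightarrow> partial i (\<lambda>w. F w x) v"
      by (rule filterlim_compose[OF _ h])
    then show "(\<lambda>m. u m x) \<longlonglongrightarrow> partial i (\<lambda>w. F w x) v"
      by (rule Lim_transform_eventually) (use ev in \<open>eventually_elim, simp add: u_def\<close>)
  qed
qed

lemma invertible_matrix_inv_right:
  fixes A :: "real^'n::finite^'n"
  assumes "invertible A"
  shows "A ** matrix_inv A = mat 1"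
  using assms unfolding invertible_def matrix_inv_def by (rule someI2_ex) auto

lemma matrix_inv_nth_cramer:
  fixes A :: "real^'n::finite^'n"
  assumes "det A \<noteq> 0"
  shows "matrix_inv A $ m $ l = det (\<chi> a b. if b = m then axis l 1 $ a else A $ a $ b) / det A"
proof -
  have "A *v (matrix_inv A *v axis l 1) = axis l 1"
    using assms by (simp add: matrix_vector_mul_assoc invertible_matrix_inv_right invertible_det_nz)
  then have "(matrix_inv A *v axis l 1) $ m = det (\<chi> a b. if b = m then axis l 1 $ a else A $ a $ b) / det A"
    using cramer[OF assms] by simp
  moreover have "(matrix_inv A *v axis l 1) $ m = matrix_inv A $ m $ l"
    by (simp add: matrix_vector_mult_def axis_def if_distrib[of "(*) _"] sum.delta cong: if_cong)
  ultimately show ?thesis by simp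
qed

lemma has_partial_det:
  fixes F :: "real^'d::finite \<Rightarrow> real^'n::finite^'n"
  assumes "\<And>a b. has_partial i (\<lambda>w. F w $ a $ b) v"
  shows "has_partial i (\<lambda>w. det (F w)) v"
  unfolding det_def
  by (intro has_partial_sum(1) has_partial_cmult(1) has_partial_prod assms finite_permutations) auto

lemma has_partial_matrix_inv:
  fixes G :: "real^'d::finite \<Rightarrow> real^'n::finite^'n"
  assumes G: "\<And>a b. has_partial k (\<lambda>w. G w $ a $ b) v" and d: "det (G v) \<noteq> 0"
  shows "has_partial k (\<lambda>w. matrix_inv (G w) $ m $ l) v"
proof -
  define N where "N w = (\<chi> a b. if b = m then axis l 1 $ a else G w $ a $ b)" for w
  have hd: "has_partial k (\<lambda>w. det (G w)) v"
    by (rule has_partial_det[OF G])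
  have "has_partial k (\<lambda>w. det (N w)) v"
    unfolding N_def
  proof (rule has_partial_det)
    show "has_partial k (\<lambda>w. (\<chi> a b. if b = m then axis l 1 $ a else G w $ a $ b) $ a $ b) v" for a b
      by (cases "b = m") (simp_all add: G has_partial_const(1))
  qed
  then have "has_partial k (\<lambda>w. det (N w) / det (G w)) v"
    by (rule has_partial_divide[OF _ hd d])
  moreover have "\<forall>\<^sub>F t in nhds 0. matrix_inv (G (v + t *\<^sub>R axis k 1)) $ m $ l
      = det (N (v + t *\<^sub>R axis k 1)) / det (G (v + t *\<^sub>R axis k 1))"
    using has_partial_eventually_nonzero[OF hd d]
    by eventually_elim (simp add: N_def matrix_inv_nth_cramer)
  ultimately show ?thesis
    using partial_cong_eventually(2)[of "\<lambda>w. matrix_inv (G w) $ m $ l" v k] by simp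
qed

lemma invertible_if_lambda_min_pos:
  fixes G :: "real^'n::finite^'n"
  assumes "lambda_min G > 0"
  shows "invertible G"
proof (rule ccontr)
  assume "\<not> invertible G"
  then obtain x where x: "G *v x = 0" "x \<noteq> 0"
    using invertible_left_inverse matrix_left_invertible_ker by blast
  define u where "u = x /\<^sub>R norm x"
  have u: "norm u = 1" "G *v u = 0"
    using x unfolding u_def by (auto simp: matrix_vector_mult_scaleR)
  obtain K where K: "\<And>y. norm (G *v y) \<le> norm y * K"
    using bounded_linear.bounded[OF matrix_vector_mul_bounded_linear[of G]] by blast
  have "bdd_below ((\<lambda>v. v \<bullet> (G *v v)) ` {v. norm v = 1})"
  proof (rule bdd_belowI2[of _ "- K"])
    fix v :: "real^'n" assume "v \<in> {v. norm v = 1}"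
    then have "\<bar>v \<bullet> (G *v v)\<bar> \<le> K"
      using Cauchy_Schwarz_ineq2[of v "G *v v"] K[of v] by simp
    then show "- K \<le> v \<bullet> (G *v v)" by linarith
  qed
  then have "lambda_min G \<le> u \<bullet> (G *v u)"
    unfolding lambda_min_def by (rule cINF_lower) (use u in simp)
  then show False using assms u by simp
qed

section \<open>Convergence to zero and boundedness in probability\<close>

text \<open>Real-valued versions of \<open>o_p(1)\<close> and \<open>O_p(1)\<close> that include measurability of every
  term, which is what makes them closed under sums and products.\<close>

definition vanishes_in_prob :: "'w measure \<Rightarrow> (nat \<Rightarrow> 'w \<Rightarrow> real) \<Rightarrow> bool" where
  "vanishes_in_prob P Y \<longleftrightarrow> (\<forall>n. Y n \<in> borel_measurable P) \<and>
     (\<forall>\<epsilon>>0. (\<lambda>n. measure P {\<omega>\<in>space P. \<epsilon> < \<bar>Y n \<omega>\<bar>}) \<longlonglongrightarrow> 0)"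

definition bounded_in_prob :: "'w measure \<Rightarrow> (nat \<Rightarrow> 'w \<Rightarrow> real) \<Rightarrow> bool" where
  "bounded_in_prob P Y \<longleftrightarrow> (\<forall>n. Y n \<in> borel_measurable P) \<and>
     (\<forall>\<epsilon>>0. \<exists>C. \<forall>\<^sub>F n in sequentially. measure P {\<omega>\<in>space P. C < \<bar>Y n \<omega>\<bar>} < \<epsilon>)"

lemma vanishes_in_prob_measurable: "vanishes_in_prob P Y \<Longrightarrow> Y n \<in> borel_measurable P"
  by (simp add: vanishes_in_prob_def)

lemma bounded_in_prob_measurable: "bounded_in_prob P Y \<Longrightarrow> Y n \<in> borel_measurable P"
  by (simp add: bounded_in_prob_def)

lemma borel_measurable_vec_nth[measurable (raw)]:
  fixes f :: "'a \<Rightarrow> real^'d::finite"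
  shows "f \<in> borel_measurable M \<Longrightarrow> (\<lambda>x. f x $ i) \<in> borel_measurable M"
  by (rule measurable_compose[OF _ borel_measurable_nth])

lemma borel_measurable_cart_iff:
  fixes V :: "'a \<Rightarrow> real^'d::finite"
  shows "V \<in> borel_measurable M \<longleftrightarrow> (\<forall>j. (\<lambda>\<omega>. V \<omega> $ j) \<in> borel_measurable M)"
proof
  show "V \<in> borel_measurable M \<Longrightarrow> \<forall>j. (\<lambda>\<omega>. V \<omega> $ j) \<in> borel_measurable M"
    by (simp add: borel_measurable_vec_nth)
  show "\<forall>j. (\<lambda>\<omega>. V \<omega> $ j) \<in> borel_measurable M \<Longrightarrow> V \<in> borel_measurable M"
    unfolding borel_measurable_euclidean_space[of V] by (auto simp: Basis_vec_def inner_axis)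
qed

context prob_space
begin

lemma events_abs_gt:
  fixes Y :: "'a \<Rightarrow> real"
  assumes "Y \<in> borel_measurable M"
  shows "{\<omega>\<in>space M. c < \<bar>Y \<omega>\<bar>} \<in> events"
  using borel_measurable_less[OF borel_measurable_const borel_measurable_abs[OF assms]] by simp

lemma prob_le_Un:
  assumes "A \<subseteq> B \<union> C" "B \<in> events" "C \<in> events"
  shows "prob A \<le> prob B + prob C"
  using finite_measure_mono[OF assms(1)] measure_Un_le[OF assms(2,3)] assms(2,3) by auto

lemma vanishes_in_prob_add:
  assumes Y: "vanishes_in_prob M Y" and Z: "vanishes_in_prob M Z"
  shows "vanishes_in_prob M (\<lambda>n \<omega>. Y n \<omega> + Z n \<omega>)"
  unfolding vanishes_in_prob_def
proof safe
  show "(\<lambda>\<omega>. Y n \<omega> + Z n \<omega>) \<in> borel_measurable M" for n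
    by (intro borel_measurable_add Y[THEN vanishes_in_prob_measurable] Z[THEN vanishes_in_prob_measurable])
  fix \<epsilon> :: real assume "\<epsilon> > 0"
  then have "(\<lambda>n. prob {\<omega>\<in>space M. \<epsilon>/2 < \<bar>Y n \<omega>\<bar>}) \<longlonglongrightarrow> 0"
    "(\<lambda>n. prob {\<omega>\<in>space M. \<epsilon>/2 < \<bar>Z n \<omega>\<bar>}) \<longlonglongrightarrow> 0"
    using Y Z half_gt_zero[OF \<open>\<epsilon> > 0\<close>] unfolding vanishes_in_prob_def by blast+
  then have lim: "(\<lambda>n. prob {\<omega>\<in>space M. \<epsilon>/2 < \<bar>Y n \<omega>\<bar>} + prob {\<omega>\<in>space M. \<epsilon>/2 < \<bar>Z n \<omega>\<bar>}) \<longlonglongrightarrow> 0"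
    by (rule tendsto_add_zero)
  have le: "prob {\<omega>\<in>space M. \<epsilon> < \<bar>Y n \<omega> + Z n \<omega>\<bar>}
      \<le> prob {\<omega>\<in>space M. \<epsilon>/2 < \<bar>Y n \<omega>\<bar>} + prob {\<omega>\<in>space M. \<epsilon>/2 < \<bar>Z n \<omega>\<bar>}" for n
    by (intro prob_le_Un events_abs_gt Y[THEN vanishes_in_prob_measurable] Z[THEN vanishes_in_prob_measurable]) auto
  show "(\<lambda>n. prob {\<omega>\<in>space M. \<epsilon> < \<bar>Y n \<omega> + Z n \<omega>\<bar>}) \<longlonglongrightarrow> 0"
    by (rule tendsto_sandwich[OF _ _ tendsto_const lim]) (intro always_eventually allI measure_nonneg le)+
qed

lemma bounded_in_prob_add:
  assumes Y: "bounded_in_prob M Y" and Z: "bounded_in_prob M Z"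
  shows "bounded_in_prob M (\<lambda>n \<omega>. Y n \<omega> + Z n \<omega>)"
  unfolding bounded_in_prob_def
proof safe
  show "(\<lambda>\<omega>. Y n \<omega> + Z n \<omega>) \<in> borel_measurable M" for n
    by (intro borel_measurable_add Y[THEN bounded_in_prob_measurable] Z[THEN bounded_in_prob_measurable])
  fix \<epsilon> :: real assume "\<epsilon> > 0"
  then obtain C1 C2 where
    C1: "\<forall>\<^sub>F n in sequentially. prob {\<omega>\<in>space M. C1 < \<bar>Y n \<omega>\<bar>} < \<epsilon>/2" and
    C2: "\<forall>\<^sub>F n in sequentially. prob {\<omega>\<in>space M. C2 < \<bar>Z n \<omega>\<bar>} < \<epsilon>/2"
    using Y Z half_gt_zero[OF \<open>\<epsilon> > 0\<close>] unfolding bounded_in_prob_def by blast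
  have le: "prob {\<omega>\<in>space M. C1 + C2 < \<bar>Y n \<omega> + Z n \<omega>\<bar>}
      \<le> prob {\<omega>\<in>space M. C1 < \<bar>Y n \<omega>\<bar>} + prob {\<omega>\<in>space M. C2 < \<bar>Z n \<omega>\<bar>}" for n
    by (intro prob_le_Un events_abs_gt Y[THEN bounded_in_prob_measurable] Z[THEN bounded_in_prob_measurable]) auto
  from C1 C2 have "\<forall>\<^sub>F n in sequentially. prob {\<omega>\<in>space M. C1 + C2 < \<bar>Y n \<omega> + Z n \<omega>\<bar>} < \<epsilon>"
    by eventually_elim (rule le_less_trans[OF le], linarith)
  then show "\<exists>C. \<forall>\<^sub>F n in sequentially. prob {\<omega>\<in>space M. C < \<bar>Y n \<omega> + Z n \<omega>\<bar>} < \<epsilon>" ..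
qed

lemma bounded_in_prob_pos:
  assumes "bounded_in_prob M Y" "\<epsilon> > 0"
  obtains C where "C > 0" "\<forall>\<^sub>F n in sequentially. prob {\<omega>\<in>space M. C < \<bar>Y n \<omega>\<bar>} < \<epsilon>"
proof -
  obtain C where C: "\<forall>\<^sub>F n in sequentially. prob {\<omega>\<in>space M. C < \<bar>Y n \<omega>\<bar>} < \<epsilon>"
    using assms unfolding bounded_in_prob_def by blast
  have le: "prob {\<omega>\<in>space M. max C 1 < \<bar>Y n \<omega>\<bar>} \<le> prob {\<omega>\<in>space M. C < \<bar>Y n \<omega>\<bar>}" for n
    by (intro finite_measure_mono events_abs_gt assms(1)[THEN bounded_in_prob_measurable]) auto
  from C have "\<forall>\<^sub>F n in sequentially. prob {\<omega>\<in>space M. max C 1 < \<bar>Y n \<omega>\<bar>} < \<epsilon>"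
    by eventually_elim (rule le_less_trans[OF le])
  then show ?thesis using that[of "max C 1"] by simp
qed

lemma vanishes_in_prob_mult:
  assumes Y: "vanishes_in_prob M Y" and Z: "bounded_in_prob M Z"
  shows "vanishes_in_prob M (\<lambda>n \<omega>. Y n \<omega> * Z n \<omega>)"
  unfolding vanishes_in_prob_def
proof safe
  show "(\<lambda>\<omega>. Y n \<omega> * Z n \<omega>) \<in> borel_measurable M" for n
    by (intro borel_measurable_times Y[THEN vanishes_in_prob_measurable] Z[THEN bounded_in_prob_measurable])
  fix \<epsilon> :: real assume e: "\<epsilon> > 0"
  show "(\<lambda>n. prob {\<omega>\<in>space M. \<epsilon> < \<bar>Y n \<omega> * Z n \<omega>\<bar>}) \<longlonglongrightarrow> 0"
  proof (rule order_tendstoI)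
    show "\<forall>\<^sub>F n in sequentially. a < prob {\<omega>\<in>space M. \<epsilon> < \<bar>Y n \<omega> * Z n \<omega>\<bar>}" if "a < 0" for a
      using that by (simp add: less_le_trans[OF _ measure_nonneg])
  next
    fix \<delta> :: real assume "\<delta> > 0"
    obtain C where C: "C > 0" "\<forall>\<^sub>F n in sequentially. prob {\<omega>\<in>space M. C < \<bar>Z n \<omega>\<bar>} < \<delta>/2"
      by (rule bounded_in_prob_pos[OF Z half_gt_zero[OF \<open>\<delta> > 0\<close>]])
    have "(\<lambda>n. prob {\<omega>\<in>space M. \<epsilon>/C < \<bar>Y n \<omega>\<bar>}) \<longlonglongrightarrow> 0"
      using Y divide_pos_pos[OF e C(1)] unfolding vanishes_in_prob_def by blast
    then have Y_small: "\<forall>\<^sub>F n in sequentially. prob {\<omega>\<in>space M. \<epsilon>/C < \<bar>Y n \<omega>\<bar>} < \<delta>/2"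
      using order_tendstoD(2) half_gt_zero[OF \<open>\<delta> > 0\<close>] by blast
    have le: "prob {\<omega>\<in>space M. \<epsilon> < \<bar>Y n \<omega> * Z n \<omega>\<bar>}
        \<le> prob {\<omega>\<in>space M. C < \<bar>Z n \<omega>\<bar>} + prob {\<omega>\<in>space M. \<epsilon>/C < \<bar>Y n \<omega>\<bar>}" for n
    proof (rule prob_le_Un)
      have bound: "\<bar>Y n \<omega> * Z n \<omega>\<bar> \<le> \<epsilon>/C * C" if "\<bar>Z n \<omega>\<bar> \<le> C" "\<bar>Y n \<omega>\<bar> \<le> \<epsilon>/C" for \<omega>
        unfolding abs_mult using that C(1) by (intro mult_mono) auto
      show "{\<omega>\<in>space M. \<epsilon> < \<bar>Y n \<omega> * Z n \<omega>\<bar>}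
          \<subseteq> {\<omega>\<in>space M. C < \<bar>Z n \<omega>\<bar>} \<union> {\<omega>\<in>space M. \<epsilon>/C < \<bar>Y n \<omega>\<bar>}"
      proof (intro subsetI)
        fix \<omega> assume \<omega>: "\<omega> \<in> {\<omega>\<in>space M. \<epsilon> < \<bar>Y n \<omega> * Z n \<omega>\<bar>}"
        show "\<omega> \<in> {\<omega>\<in>space M. C < \<bar>Z n \<omega>\<bar>} \<union> {\<omega>\<in>space M. \<epsilon>/C < \<bar>Y n \<omega>\<bar>}"
        proof (rule ccontr)
          assume "\<omega> \<notin> {\<omega>\<in>space M. C < \<bar>Z n \<omega>\<bar>} \<union> {\<omega>\<in>space M. \<epsilon>/C < \<bar>Y n \<omega>\<bar>}"
          then have "\<bar>Y n \<omega> * Z n \<omega>\<bar> \<le> \<epsilon>/C * C"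
            using \<omega> by (intro bound) auto
          with \<omega> C(1) show False by simp
        qed
      qed
    qed (intro events_abs_gt Y[THEN vanishes_in_prob_measurable] Z[THEN bounded_in_prob_measurable])+
    from Y_small C(2) show "\<forall>\<^sub>F n in sequentially. prob {\<omega>\<in>space M. \<epsilon> < \<bar>Y n \<omega> * Z n \<omega>\<bar>} < \<delta>"
      by eventually_elim (rule le_less_trans[OF le], linarith)
  qed
qed

lemma bounded_in_prob_mult:
  assumes Y: "bounded_in_prob M Y" and Z: "bounded_in_prob M Z"
  shows "bounded_in_prob M (\<lambda>n \<omega>. Y n \<omega> * Z n \<omega>)"
  unfolding bounded_in_prob_def
proof safe
  show "(\<lambda>\<omega>. Y n \<omega> * Z n \<omega>) \<in> borel_measurable M" for n
    by (intro borel_measurable_times Y[THEN bounded_in_prob_measurable] Z[THEN bounded_in_prob_measurable])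
  fix \<epsilon> :: real assume "\<epsilon> > 0"
  obtain C1 where C1: "C1 > 0" "\<forall>\<^sub>F n in sequentially. prob {\<omega>\<in>space M. C1 < \<bar>Y n \<omega>\<bar>} < \<epsilon>/2"
    by (rule bounded_in_prob_pos[OF Y half_gt_zero[OF \<open>\<epsilon> > 0\<close>]])
  obtain C2 where C2: "C2 > 0" "\<forall>\<^sub>F n in sequentially. prob {\<omega>\<in>space M. C2 < \<bar>Z n \<omega>\<bar>} < \<epsilon>/2"
    by (rule bounded_in_prob_pos[OF Z half_gt_zero[OF \<open>\<epsilon> > 0\<close>]])
  have le: "prob {\<omega>\<in>space M. C1 * C2 < \<bar>Y n \<omega> * Z n \<omega>\<bar>}
      \<le> prob {\<omega>\<in>space M. C1 < \<bar>Y n \<omega>\<bar>} + prob {\<omega>\<in>space M. C2 < \<bar>Z n \<omega>\<bar>}" for n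
  proof (rule prob_le_Un)
    have bound: "\<bar>Y n \<omega> * Z n \<omega>\<bar> \<le> C1 * C2" if "\<bar>Y n \<omega>\<bar> \<le> C1" "\<bar>Z n \<omega>\<bar> \<le> C2" for \<omega>
      unfolding abs_mult using that C1(1) by (intro mult_mono) auto
    show "{\<omega>\<in>space M. C1 * C2 < \<bar>Y n \<omega> * Z n \<omega>\<bar>}
        \<subseteq> {\<omega>\<in>space M. C1 < \<bar>Y n \<omega>\<bar>} \<union> {\<omega>\<in>space M. C2 < \<bar>Z n \<omega>\<bar>}"
    proof (intro subsetI)
      fix \<omega> assume \<omega>: "\<omega> \<in> {\<omega>\<in>space M. C1 * C2 < \<bar>Y n \<omega> * Z n \<omega>\<bar>}"
      show "\<omega> \<in> {\<omega>\<in>space M. C1 < \<bar>Y n \<omega>\<bar>} \<union> {\<omega>\<in>space M. C2 < \<bar>Z n \<omega>\<bar>}"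
      proof (rule ccontr)
        assume "\<omega> \<notin> {\<omega>\<in>space M. C1 < \<bar>Y n \<omega>\<bar>} \<union> {\<omega>\<in>space M. C2 < \<bar>Z n \<omega>\<bar>}"
        then have "\<bar>Y n \<omega> * Z n \<omega>\<bar> \<le> C1 * C2"
          using \<omega> by (intro bound) auto
        with \<omega> show False by simp
      qed
    qed
  qed (intro events_abs_gt Y[THEN bounded_in_prob_measurable] Z[THEN bounded_in_prob_measurable])+
  from C1(2) C2(2) have "\<forall>\<^sub>F n in sequentially. prob {\<omega>\<in>space M. C1 * C2 < \<bar>Y n \<omega> * Z n \<omega>\<bar>} < \<epsilon>"
    by eventually_elim (rule le_less_trans[OF le], linarith)
  then show "\<exists>C. \<forall>\<^sub>F n in sequentially. prob {\<omega>\<in>space M. C < \<bar>Y n \<omega> * Z n \<omega>\<bar>} < \<epsilon>" ..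
qed

lemma bounded_in_prob_const: "bounded_in_prob M (\<lambda>n \<omega>. c)"
  unfolding bounded_in_prob_def by (auto intro!: exI[of _ "\<bar>c\<bar>"])

lemma vanishes_in_prob_LIMSEQ:
  assumes "c \<longlonglongrightarrow> 0"
  shows "vanishes_in_prob M (\<lambda>n \<omega>. c n)"
  unfolding vanishes_in_prob_def
proof safe
  fix \<epsilon> :: real assume "\<epsilon> > 0"
  then have "\<forall>\<^sub>F n in sequentially. \<bar>c n\<bar> < \<epsilon>"
    using order_tendstoD(2)[OF tendsto_rabs_zero[OF assms]] by blast
  then have "\<forall>\<^sub>F n in sequentially. prob {\<omega>\<in>space M. \<epsilon> < \<bar>c n\<bar>} = 0"
    by eventually_elim simp
  then show "(\<lambda>n. prob {\<omega>\<in>space M. \<epsilon> < \<bar>c n\<bar>}) \<longlonglongrightarrow> 0"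
    by (rule tendsto_eventually)
qed simp

lemma vanishes_imp_bounded_in_prob:
  assumes "vanishes_in_prob M Y"
  shows "bounded_in_prob M Y"
  unfolding bounded_in_prob_def
proof safe
  show "Y n \<in> borel_measurable M" for n
    using assms by (simp add: vanishes_in_prob_def)
  fix \<epsilon> :: real assume "\<epsilon> > 0"
  moreover have "(\<lambda>n. prob {\<omega>\<in>space M. 1 < \<bar>Y n \<omega>\<bar>}) \<longlonglongrightarrow> 0"
    using assms by (simp add: vanishes_in_prob_def)
  ultimately show "\<exists>C. \<forall>\<^sub>F n in sequentially. prob {\<omega>\<in>space M. C < \<bar>Y n \<omega>\<bar>} < \<epsilon>"
    by (blast dest: order_tendstoD(2))
qed

lemma vanishes_in_prob_cmult:
  assumes "vanishes_in_prob M Y"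
  shows "vanishes_in_prob M (\<lambda>n \<omega>. c * Y n \<omega>)"
  using vanishes_in_prob_mult[OF assms bounded_in_prob_const[of c]] by (simp only: mult.commute)

lemma bounded_in_prob_cmult:
  assumes "bounded_in_prob M Y"
  shows "bounded_in_prob M (\<lambda>n \<omega>. c * Y n \<omega>)"
  by (rule bounded_in_prob_mult[OF bounded_in_prob_const assms])

lemma vanishes_in_prob_diff:
  "vanishes_in_prob M Y \<Longrightarrow> vanishes_in_prob M Z \<Longrightarrow> vanishes_in_prob M (\<lambda>n \<omega>. Y n \<omega> - Z n \<omega>)"
  using vanishes_in_prob_add[OF _ vanishes_in_prob_cmult, of Y Z "-1"] by simp

lemma bounded_in_prob_diff:
  "bounded_in_prob M Y \<Longrightarrow> bounded_in_prob M Z \<Longrightarrow> bounded_in_prob M (\<lambda>n \<omega>. Y n \<omega> - Z n \<omega>)"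
  using bounded_in_prob_add[OF _ bounded_in_prob_cmult, of Y Z "-1"] by simp

lemma vanishes_in_prob_sum:
  "finite I \<Longrightarrow> (\<And>j. j \<in> I \<Longrightarrow> vanishes_in_prob M (Y j)) \<Longrightarrow> vanishes_in_prob M (\<lambda>n \<omega>. \<Sum>j\<in>I. Y j n \<omega>)"
proof (induction I rule: finite_induct)
  case empty
  then show ?case using vanishes_in_prob_LIMSEQ[of "\<lambda>_. 0"] by simp
next
  case (insert j I)
  then show ?case by (simp add: vanishes_in_prob_add)
qed

lemma bounded_in_prob_sum:
  "finite I \<Longrightarrow> (\<And>j. j \<in> I \<Longrightarrow> bounded_in_prob M (Y j)) \<Longrightarrow> bounded_in_prob M (\<lambda>n \<omega>. \<Sum>j\<in>I. Y j n \<omega>)"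
proof (induction I rule: finite_induct)
  case empty
  then show ?case using bounded_in_prob_const[of 0] by simp
next
  case (insert j I)
  then show ?case by (simp add: bounded_in_prob_add)
qed

lemma vanishes_in_prob_cong:
  assumes "vanishes_in_prob M Y" "\<forall>\<^sub>F n in sequentially. \<forall>\<omega>\<in>space M. Y n \<omega> = Z n \<omega>"
    and "\<And>n. Z n \<in> borel_measurable M"
  shows "vanishes_in_prob M Z"
  unfolding vanishes_in_prob_def
proof safe
  fix \<epsilon> :: real assume "\<epsilon> > 0"
  then have "(\<lambda>n. prob {\<omega>\<in>space M. \<epsilon> < \<bar>Y n \<omega>\<bar>}) \<longlonglongrightarrow> 0"
    using assms(1) by (simp add: vanishes_in_prob_def)
  moreover have "\<forall>\<^sub>F n in sequentially. prob {\<omega>\<in>space M. \<epsilon> < \<bar>Y n \<omega>\<bar>} = prob {\<omega>\<in>space M. \<epsilon> < \<bar>Z n \<omega>\<bar>}"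
    using assms(2) by eventually_elim (intro arg_cong[where f=prob] Collect_cong, auto)
  ultimately show "(\<lambda>n. prob {\<omega>\<in>space M. \<epsilon> < \<bar>Z n \<omega>\<bar>}) \<longlonglongrightarrow> 0"
    by (rule Lim_transform_eventually)
qed (use assms(3) in simp)

lemma bounded_in_prob_cong:
  assumes "bounded_in_prob M Y" "\<And>n \<omega>. \<omega> \<in> space M \<Longrightarrow> Y n \<omega> = Z n \<omega>"
  shows "bounded_in_prob M Z"
proof -
  have "Y n \<in> borel_measurable M" for n
    using assms(1) by (simp add: bounded_in_prob_def)
  then have "Z n \<in> borel_measurable M" for n
    by (rule measurable_cong[THEN iffD1, rotated]) (rule assms(2))
  moreover have sets_eq: "{\<omega>\<in>space M. C < \<bar>Y n \<omega>\<bar>} = {\<omega>\<in>space M. C < \<bar>Z n \<omega>\<bar>}" for C n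
    using assms(2) by auto
  ultimately show ?thesis
    using assms(1) unfolding bounded_in_prob_def sets_eq by blast
qed

lemma o_p_nth:
  fixes V :: "nat \<Rightarrow> 'a \<Rightarrow> real^'d::finite"
  assumes V: "o_p M V r" and [measurable]: "\<And>n. V n \<in> borel_measurable M"
  shows "o_p M (\<lambda>n \<omega>. V n \<omega> $ j) r"
  unfolding o_p_def
proof safe
  fix \<epsilon> :: real assume "\<epsilon> > 0"
  then have lim: "(\<lambda>n. prob {\<omega>\<in>space M. \<epsilon> * r n < norm (V n \<omega>)}) \<longlonglongrightarrow> 0"
    using V by (simp add: o_p_def)
  have "prob {\<omega>\<in>space M. \<epsilon> * r n < norm (V n \<omega> $ j)} \<le> prob {\<omega>\<in>space M. \<epsilon> * r n < norm (V n \<omega>)}" for n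
    using component_le_norm_cart[of "V n _" j] by (intro finite_measure_mono) (auto intro: less_le_trans)
  then show "(\<lambda>n. prob {\<omega>\<in>space M. \<epsilon> * r n < norm (V n \<omega> $ j)}) \<longlonglongrightarrow> 0"
    by (intro tendsto_sandwich[OF _ _ tendsto_const lim] always_eventually allI measure_nonneg)
qed

lemma o_p_imp_vanishes_in_prob:
  fixes Y :: "nat \<Rightarrow> 'a \<Rightarrow> real"
  assumes Y: "o_p M Y r" "\<And>n. Y n \<in> borel_measurable M" and r: "\<forall>\<^sub>F n in sequentially. r n > 0"
  shows "vanishes_in_prob M (\<lambda>n \<omega>. Y n \<omega> / r n)"
  unfolding vanishes_in_prob_def
proof safe
  show "(\<lambda>\<omega>. Y n \<omega> / r n) \<in> borel_measurable M" for n
    using Y(2) by measurable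
  fix \<epsilon> :: real assume "\<epsilon> > 0"
  then have "(\<lambda>n. prob {\<omega>\<in>space M. \<epsilon> * r n < \<bar>Y n \<omega>\<bar>}) \<longlonglongrightarrow> 0"
    using Y(1) by (simp add: o_p_def)
  moreover from r have "\<forall>\<^sub>F n in sequentially.
      prob {\<omega>\<in>space M. \<epsilon> * r n < \<bar>Y n \<omega>\<bar>} = prob {\<omega>\<in>space M. \<epsilon> < \<bar>Y n \<omega> / r n\<bar>}"
    by eventually_elim (simp add: abs_divide pos_less_divide_eq)
  ultimately show "(\<lambda>n. prob {\<omega>\<in>space M. \<epsilon> < \<bar>Y n \<omega> / r n\<bar>}) \<longlonglongrightarrow> 0"
    by (rule Lim_transform_eventually)
qed

lemma o_p_imp_vanishes_in_prob_at_rate: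
  fixes Y :: "nat \<Rightarrow> 'a \<Rightarrow> real"
  assumes Y: "o_p M Y r" "\<And>n. Y n \<in> borel_measurable M"
    and r: "\<forall>\<^sub>F n in sequentially. r n > 0" "r \<longlonglongrightarrow> 0"
  shows "vanishes_in_prob M Y"
proof (rule vanishes_in_prob_cong)
  show "vanishes_in_prob M (\<lambda>n \<omega>. Y n \<omega> / r n * r n)"
    by (intro vanishes_in_prob_mult o_p_imp_vanishes_in_prob[OF Y r(1)]
        vanishes_imp_bounded_in_prob vanishes_in_prob_LIMSEQ r(2))
  show "\<forall>\<^sub>F n in sequentially. \<forall>\<omega>\<in>space M. Y n \<omega> / r n * r n = Y n \<omega>"
    using r(1) by eventually_elim simp
qed (rule Y(2))

lemma vanishes_in_prob_imp_o_p: "vanishes_in_prob M Y \<Longrightarrow> o_p M Y (\<lambda>n. 1)"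
  by (simp add: vanishes_in_prob_def o_p_def)

lemma O_p1_nth_bounded_in_prob:
  fixes V :: "nat \<Rightarrow> 'a \<Rightarrow> real^'d::finite"
  assumes V: "O_p1 M V" and [measurable]: "\<And>n. V n \<in> borel_measurable M"
  shows "bounded_in_prob M (\<lambda>n \<omega>. V n \<omega> $ j)"
  unfolding bounded_in_prob_def
proof safe
  show "(\<lambda>\<omega>. V n \<omega> $ j) \<in> borel_measurable M" for n
    by measurable
  fix \<epsilon> :: real assume "\<epsilon> > 0"
  then obtain C where C: "\<forall>\<^sub>F n in sequentially. prob {\<omega>\<in>space M. C < norm (V n \<omega>)} < \<epsilon>"
    using V unfolding O_p1_def by blast
  have le: "prob {\<omega>\<in>space M. C < \<bar>V n \<omega> $ j\<bar>} \<le> prob {\<omega>\<in>space M. C < norm (V n \<omega>)}" for n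
    using component_le_norm_cart[of "V n _" j] by (intro finite_measure_mono) (auto intro: less_le_trans)
  from C have "\<forall>\<^sub>F n in sequentially. prob {\<omega>\<in>space M. C < \<bar>V n \<omega> $ j\<bar>} < \<epsilon>"
    by eventually_elim (rule le_less_trans[OF le])
  then show "\<exists>C. \<forall>\<^sub>F n in sequentially. prob {\<omega>\<in>space M. C < \<bar>V n \<omega> $ j\<bar>} < \<epsilon>" ..
qed

section \<open>Laws of large numbers\<close>

context
  fixes Y :: "nat \<Rightarrow> 'a \<Rightarrow> real" and \<mu> \<sigma>2 :: real
  assumes [measurable]: "\<And>t. random_variable borel (Y t)"
    and square_int: "\<And>t. integrable M (\<lambda>\<omega>. (Y t \<omega>)\<^sup>2)"
    and mean: "\<And>t. expectation (Y t) = \<mu>"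
    and var: "\<And>t. variance (Y t) \<le> \<sigma>2"
    and indep: "\<And>s t. s \<noteq> t \<Longrightarrow> indep_var borel (Y s) borel (Y t)"
begin

lemma second_moment_centered_sum:
  assumes I: "finite I"
  shows "integrable M (\<lambda>\<omega>. (\<Sum>t\<in>I. Y t \<omega> - \<mu>)\<^sup>2)"
    and "expectation (\<lambda>\<omega>. (\<Sum>t\<in>I. Y t \<omega> - \<mu>)\<^sup>2) \<le> real (card I) * \<sigma>2"
proof -
  have int: "integrable M (Y t)" for t
    by (rule square_integrable_imp_integrable) (use square_int in \<open>simp_all add: power2_eq_square\<close>)
  have centered: "integrable M (\<lambda>\<omega>. Y t \<omega> - \<mu>)" "expectation (\<lambda>\<omega>. Y t \<omega> - \<mu>) = 0" for t
    using int[of t] mean[of t] by (simp_all add: prob_space)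
  have cross: "integrable M (\<lambda>\<omega>. (Y s \<omega> - \<mu>) * (Y t \<omega> - \<mu>)) \<and>
      expectation (\<lambda>\<omega>. (Y s \<omega> - \<mu>) * (Y t \<omega> - \<mu>)) \<le> (if s = t then \<sigma>2 else 0)" for s t
  proof (cases "s = t")
    case True
    have "integrable M (\<lambda>\<omega>. (Y t \<omega> - \<mu>)\<^sup>2)"
      using int[of t] square_int[of t] by (simp add: power2_diff)
    moreover have "expectation (\<lambda>\<omega>. (Y t \<omega> - \<mu>)\<^sup>2) \<le> \<sigma>2"
      using var[of t] by (simp add: mean)
    ultimately show ?thesis
      using True by (simp add: power2_eq_square)
  next
    case False
    have "indep_var borel (\<lambda>\<omega>. Y s \<omega> - \<mu>) borel (\<lambda>\<omega>. Y t \<omega> - \<mu>)"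
      using indep_var_compose[OF indep[OF False], of "\<lambda>y. y - \<mu>" borel "\<lambda>y. y - \<mu>" borel]
      by (simp add: comp_def)
    from indep_var_integrable[OF this centered(1,1)] indep_var_lebesgue_integral[OF this centered(1,1)]
    show ?thesis
      using False by (simp add: centered(2))
  qed
  have square_sum: "(\<Sum>t\<in>I. Y t \<omega> - \<mu>)\<^sup>2 = (\<Sum>s\<in>I. \<Sum>t\<in>I. (Y s \<omega> - \<mu>) * (Y t \<omega> - \<mu>))" for \<omega>
    by (simp add: power2_eq_square sum_product)
  show "integrable M (\<lambda>\<omega>. (\<Sum>t\<in>I. Y t \<omega> - \<mu>)\<^sup>2)"
    unfolding square_sum using cross by auto
  have "expectation (\<lambda>\<omega>. (\<Sum>t\<in>I. Y t \<omega> - \<mu>)\<^sup>2)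
      = (\<Sum>s\<in>I. \<Sum>t\<in>I. expectation (\<lambda>\<omega>. (Y s \<omega> - \<mu>) * (Y t \<omega> - \<mu>)))"
    unfolding square_sum using cross by (simp add: Bochner_Integration.integral_sum)
  also have "\<dots> \<le> (\<Sum>s\<in>I. \<Sum>t\<in>I. if s = t then \<sigma>2 else 0)"
    using cross by (intro sum_mono) auto
  also have "\<dots> = real (card I) * \<sigma>2"
    using I by simp
  finally show "expectation (\<lambda>\<omega>. (\<Sum>t\<in>I. Y t \<omega> - \<mu>)\<^sup>2) \<le> real (card I) * \<sigma>2" .
qed

lemma average_deviation_bound:
  assumes "\<epsilon> > 0" "n > 0"
  shows "prob {\<omega>\<in>space M. \<epsilon> < \<bar>(\<Sum>t<n. Y t \<omega>) / real n - \<mu>\<bar>} \<le> \<sigma>2 / (\<epsilon>\<^sup>2 * real n)"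
proof -
  note moments = second_moment_centered_sum[OF finite_lessThan[of n]]
  have avg: "(\<Sum>t<n. Y t \<omega>) / real n - \<mu> = (\<Sum>t<n. Y t \<omega> - \<mu>) / real n" for \<omega>
    using \<open>n > 0\<close> by (simp add: sum_subtractf field_simps)
  have "prob {\<omega>\<in>space M. \<epsilon> < \<bar>(\<Sum>t<n. Y t \<omega>) / real n - \<mu>\<bar>}
      \<le> prob {\<omega>\<in>space M. \<bar>(\<Sum>t<n. Y t \<omega> - \<mu>) / real n\<bar> \<ge> \<epsilon>}"
    unfolding avg by (intro finite_measure_mono) auto
  also have "\<dots> \<le> expectation (\<lambda>\<omega>. ((\<Sum>t<n. Y t \<omega> - \<mu>) / real n) ^ 2) / \<epsilon>\<^sup>2"
    using moments(1) \<open>\<epsilon> > 0\<close> by (intro second_moment_method) (simp_all add: power_divide)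
  also have "\<dots> = expectation (\<lambda>\<omega>. (\<Sum>t<n. Y t \<omega> - \<mu>)\<^sup>2) / (real n)\<^sup>2 / \<epsilon>\<^sup>2"
    by (simp add: power_divide)
  also have "\<dots> \<le> real n * \<sigma>2 / (real n)\<^sup>2 / \<epsilon>\<^sup>2"
    using moments(2) by (intro divide_right_mono) simp_all
  also have "\<dots> = \<sigma>2 / (\<epsilon>\<^sup>2 * real n)"
    using \<open>n > 0\<close> by (simp add: power2_eq_square)
  finally show ?thesis .
qed

theorem weak_law_of_large_numbers: "vanishes_in_prob M (\<lambda>n \<omega>. (\<Sum>t<n. Y t \<omega>) / real n - \<mu>)"
  unfolding vanishes_in_prob_def
proof safe
  show "(\<lambda>\<omega>. (\<Sum>t<n. Y t \<omega>) / real n - \<mu>) \<in> borel_measurable M" for n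
    by measurable
  fix \<epsilon> :: real assume "\<epsilon> > 0"
  have "(\<lambda>n. \<sigma>2 / \<epsilon>\<^sup>2 * inverse (real n)) \<longlonglongrightarrow> \<sigma>2 / \<epsilon>\<^sup>2 * 0"
    by (intro tendsto_mult tendsto_const lim_inverse_n)
  then have lim: "(\<lambda>n. \<sigma>2 / (\<epsilon>\<^sup>2 * real n)) \<longlonglongrightarrow> 0"
    by (simp add: field_simps)
  have ev_le: "\<forall>\<^sub>F n in sequentially.
      prob {\<omega>\<in>space M. \<epsilon> < \<bar>(\<Sum>t<n. Y t \<omega>) / real n - \<mu>\<bar>} \<le> \<sigma>2 / (\<epsilon>\<^sup>2 * real n)"
    using eventually_gt_at_top[of 0] by eventually_elim (rule average_deviation_bound[OF \<open>\<epsilon> > 0\<close>])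
  show "(\<lambda>n. prob {\<omega>\<in>space M. \<epsilon> < \<bar>(\<Sum>t<n. Y t \<omega>) / real n - \<mu>\<bar>}) \<longlonglongrightarrow> 0"
    by (rule tendsto_sandwich[OF _ ev_le tendsto_const lim]) (intro always_eventually allI measure_nonneg)
qed

end

lemma bounded_in_prob_average:
  fixes Y :: "nat \<Rightarrow> 'a \<Rightarrow> real"
  assumes int: "\<And>t. integrable M (Y t)" and first_moment: "\<And>t. expectation (\<lambda>\<omega>. \<bar>Y t \<omega>\<bar>) \<le> m"
  shows "bounded_in_prob M (\<lambda>n \<omega>. (\<Sum>t<n. Y t \<omega>) / real n)"
  unfolding bounded_in_prob_def
proof safe
  have [measurable]: "random_variable borel (Y t)" for t
    using int by simp
  show "(\<lambda>\<omega>. (\<Sum>t<n. Y t \<omega>) / real n) \<in> borel_measurable M" for n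
    by measurable
  fix \<epsilon> :: real assume "\<epsilon> > 0"
  define C where "C = \<bar>m\<bar> / \<epsilon> + 1"
  have C: "C > 0" "\<bar>m\<bar> / C < \<epsilon>"
    using \<open>\<epsilon> > 0\<close> by (auto simp: C_def field_simps add_nonneg_pos)
  have "prob {\<omega>\<in>space M. C < \<bar>(\<Sum>t<n. Y t \<omega>) / real n\<bar>} < \<epsilon>" for n
  proof -
    have "prob {\<omega>\<in>space M. C < \<bar>(\<Sum>t<n. Y t \<omega>) / real n\<bar>}
        \<le> prob {\<omega>\<in>space M. C \<le> (\<Sum>t<n. \<bar>Y t \<omega>\<bar>) / real n}"
      by (intro finite_measure_mono)
         (auto simp: abs_divide intro: order.trans[OF less_imp_le divide_right_mono[OF sum_abs]])
    also have "\<dots> \<le> expectation (\<lambda>\<omega>. (\<Sum>t<n. \<bar>Y t \<omega>\<bar>) / real n) / C"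
      using int C(1) by (intro integral_Markov_inequality_measure[where A="space M"]) auto
    also have "\<dots> \<le> \<bar>m\<bar> / C"
    proof (cases "n = 0")
      case False
      have "expectation (\<lambda>\<omega>. (\<Sum>t<n. \<bar>Y t \<omega>\<bar>) / real n) = (\<Sum>t<n. expectation (\<lambda>\<omega>. \<bar>Y t \<omega>\<bar>)) / real n"
        using int by (simp add: Bochner_Integration.integral_sum)
      also have "\<dots> \<le> (\<Sum>t<n. \<bar>m\<bar>) / real n"
        by (intro divide_right_mono sum_mono) (auto intro: order.trans[OF first_moment abs_ge_self])
      finally show ?thesis
        using False C(1) by (intro divide_right_mono) simp_all
    qed (use C(1) in simp)
    finally show ?thesis using C(2) by linarith
  qed
  then show "\<exists>C. \<forall>\<^sub>F n in sequentially. prob {\<omega>\<in>space M. C < \<bar>(\<Sum>t<n. Y t \<omega>) / real n\<bar>} < \<epsilon>"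
    by (intro exI[of _ C] always_eventually allI)
qed

end

locale iid_sample = prob_space P for P :: "'w measure" +
  fixes M :: "'a measure" and X :: "nat \<Rightarrow> 'w \<Rightarrow> 'a" and q :: "'a \<Rightarrow> real"
  assumes indep: "indep_vars (\<lambda>_. M) X UNIV"
    and ident: "\<And>t. distr P M (X t) = density M (\<lambda>x. ennreal (q x))"
    and density_measurable: "q \<in> borel_measurable M"
    and density_nonneg: "\<And>x. x \<in> space M \<Longrightarrow> 0 \<le> q x"
begin

declare density_measurable[measurable]

lemma X_measurable[measurable]: "X t \<in> measurable P M"
  using indep by (auto simp: indep_vars_def)

lemma sample_integrable_expectation:
  assumes h: "h \<in> borel_measurable M" and int: "integrable M (\<lambda>x. h x * q x)"
  shows "integrable P (\<lambda>\<omega>. h (X t \<omega>))" and "expectation (\<lambda>\<omega>. h (X t \<omega>)) = (\<integral>x. h x * q x \<partial>M)"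
proof -
  have q: "AE x in M. 0 \<le> q x"
    using density_nonneg by (auto intro: AE_I2)
  have "integrable (distr P M (X t)) h"
    unfolding ident using integrable_real_density[OF density_measurable q h] int
    by (simp add: mult.commute)
  then show "integrable P (\<lambda>\<omega>. h (X t \<omega>))"
    using integrable_distr_eq[OF X_measurable h] by simp
  have "expectation (\<lambda>\<omega>. h (X t \<omega>)) = integral\<^sup>L (distr P M (X t)) h"
    using integral_distr[OF X_measurable h] by simp
  also have "\<dots> = (\<integral>x. h x * q x \<partial>M)"
    unfolding ident using integral_real_density[OF density_measurable q h] by (simp add: mult.commute)
  finally show "expectation (\<lambda>\<omega>. h (X t \<omega>)) = (\<integral>x. h x * q x \<partial>M)" .
qed

lemma sample_indep_var:
  assumes "s \<noteq> t" and f: "f \<in> borel_measurable M" and g: "g \<in> borel_measurable M"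
  shows "indep_var borel (\<lambda>\<omega>. f (X s \<omega>)) borel (\<lambda>\<omega>. g (X t \<omega>))"
proof -
  have "indep_var borel ((\<lambda>y. f (y s)) \<circ> (\<lambda>\<omega>. restrict (\<lambda>i. X i \<omega>) {s}))
      borel ((\<lambda>y. g (y t)) \<circ> (\<lambda>\<omega>. restrict (\<lambda>i. X i \<omega>) {t}))"
    using assms by (intro indep_var_compose[OF indep_var_restrict[OF indep]]) auto
  then show ?thesis
    by (simp add: comp_def)
qed

lemma sample_average_minus_mean_vanishes:
  assumes h[measurable]: "h \<in> borel_measurable M"
    and int: "integrable M (\<lambda>x. h x * q x)" and square_int: "integrable M (\<lambda>x. (h x)\<^sup>2 * q x)"
  shows "vanishes_in_prob P (\<lambda>n \<omega>. (\<Sum>t<n. h (X t \<omega>)) / real n - (\<integral>x. h x * q x \<partial>M))"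
proof (rule weak_law_of_large_numbers)
  note first = sample_integrable_expectation[OF h int]
  note second = sample_integrable_expectation[of "\<lambda>x. (h x)\<^sup>2", OF _ square_int]
  show "integrable P (\<lambda>\<omega>. (h (X t \<omega>))\<^sup>2)" for t
    using second by simp
  show "expectation (\<lambda>\<omega>. h (X t \<omega>)) = (\<integral>x. h x * q x \<partial>M)" for t
    using first by simp
  show "variance (\<lambda>\<omega>. h (X t \<omega>)) \<le> (\<integral>x. (h x)\<^sup>2 * q x \<partial>M) - (\<integral>x. h x * q x \<partial>M)\<^sup>2" for t
    using first second variance_eq[of "\<lambda>\<omega>. h (X t \<omega>)"] by simp
  show "indep_var borel (\<lambda>\<omega>. h (X s \<omega>)) borel (\<lambda>\<omega>. h (X t \<omega>))" if "s \<noteq> t" for s t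
    using sample_indep_var[OF that h h] .
qed measurable

lemma sample_average_bounded:
  assumes h[measurable]: "h \<in> borel_measurable M" and int: "integrable M (\<lambda>x. \<bar>h x\<bar> * q x)"
  shows "bounded_in_prob P (\<lambda>n \<omega>. (\<Sum>t<n. h (X t \<omega>)) / real n)"
proof (rule bounded_in_prob_average)
  have "integrable M (\<lambda>x. h x * q x)"
    by (rule Bochner_Integration.integrable_bound[OF int]) (auto intro!: AE_I2 simp: abs_mult density_nonneg)
  then show "integrable P (\<lambda>\<omega>. h (X t \<omega>))" for t
    by (rule sample_integrable_expectation(1)[OF h])
  show "expectation (\<lambda>\<omega>. \<bar>h (X t \<omega>)\<bar>) \<le> (\<integral>x. \<bar>h x\<bar> * q x \<partial>M)" for t
    using sample_integrable_expectation[of "\<lambda>x. \<bar>h x\<bar>", OF _ int] by simp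
qed

end

lemma integrable_if_SUP_nn_integral_finite:
  assumes "v \<in> N" "(SUP w\<in>N. \<integral>\<^sup>+ x. ennreal (f w x) \<partial>M) < \<infinity>"
    and "f v \<in> borel_measurable M" "\<And>x. x \<in> space M \<Longrightarrow> 0 \<le> f v x"
  shows "integrable M (f v)"
proof (rule integrableI_nonneg)
  show "(\<integral>\<^sup>+ x. ennreal (f v x) \<partial>M) < \<infinity>"
    using SUP_upper[OF assms(1), of "\<lambda>w. \<integral>\<^sup>+ x. ennreal (f w x) \<partial>M"] assms(2) by simp
qed (use assms(3,4) in \<open>auto intro: AE_I2\<close>)

locale statistical_model =
  fixes M :: "'a measure" and p :: "real^'d::finite \<Rightarrow> 'a \<Rightarrow> real" and \<Theta> :: "(real^'d) set"
  assumes model: "stat_model M p \<Theta>"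
begin

lemma open_parameters: "open \<Theta>"
  using model by (simp add: stat_model_def)

lemma p_pos: "v \<in> \<Theta> \<Longrightarrow> x \<in> space M \<Longrightarrow> 0 < p v x"
  using model by (simp add: stat_model_def)

lemma p_measurable: "v \<in> \<Theta> \<Longrightarrow> p v \<in> borel_measurable M"
  using model by (simp add: stat_model_def)

lemma logp_Ck_on_3: "x \<in> space M \<Longrightarrow> Ck_on 3 \<Theta> (logp p x)"
  using model by (simp add: stat_model_def)

lemma fisher_Ck_on_2: "Ck_on 2 \<Theta> (\<lambda>v. fisher M p v $ i $ j)"
  using model by (simp add: stat_model_def)

lemma borel_measurable_partial_logp:
  assumes "v \<in> \<Theta>"
  shows "(\<lambda>x. partial i (logp p x) v) \<in> borel_measurable M"
    and "(\<lambda>x. partial i (partial j (logp p x)) v) \<in> borel_measurable M"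
    and "(\<lambda>x. partial i (partial j (partial k (logp p x))) v) \<in> borel_measurable M"
proof -
  have d0: "(\<lambda>x. logp p x w) \<in> borel_measurable M" if "w \<in> \<Theta>" for w
    unfolding logp_def using p_measurable[OF that] by measurable
  have d1: "(\<lambda>x. partial i (logp p x) w) \<in> borel_measurable M" if "w \<in> \<Theta>" for i w
    using borel_measurable_partial[OF open_parameters that, of "\<lambda>w x. logp p x w"] d0
      Ck_on_3_has_partial(1)[OF logp_Ck_on_3 that] by simp
  have d2: "(\<lambda>x. partial i (partial j (logp p x)) w) \<in> borel_measurable M" if "w \<in> \<Theta>" for i j w
    using borel_measurable_partial[OF open_parameters that, of "\<lambda>w x. partial j (logp p x) w"] d1
      Ck_on_3_has_partial(2)[OF logp_Ck_on_3 that] by simp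
  show "(\<lambda>x. partial i (logp p x) v) \<in> borel_measurable M"
    and "(\<lambda>x. partial i (partial j (logp p x)) v) \<in> borel_measurable M"
    using d1 d2 assms by auto
  show "(\<lambda>x. partial i (partial j (partial k (logp p x))) v) \<in> borel_measurable M"
    using borel_measurable_partial[OF open_parameters assms, of "\<lambda>w x. partial j (partial k (logp p x)) w"] d2
      Ck_on_3_has_partial(3)[OF logp_Ck_on_3 assms] by simp
qed

lemma partial_density:
  assumes x: "x \<in> space M" and v: "v \<in> \<Theta>"
  shows "has_partial j (\<lambda>w. p w x) v" and "partial j (\<lambda>w. p w x) v = p v x * partial j (logp p x) v"
proof -
  have p_exp: "p w x = exp (logp p x w)" if "w \<in> \<Theta>" for w
    using p_pos[OF that x] by (simp add: logp_def)
  show "has_partial j (\<lambda>w. p w x) v" and "partial j (\<lambda>w. p w x) v = p v x * partial j (logp p x) v"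
    using partial_cong_open[OF open_parameters v p_exp] has_partial_exp[OF Ck_on_3_has_partial(1)[OF logp_Ck_on_3[OF x] v]]
      p_exp[OF v] by auto
qed

lemma second_partial_density:
  assumes x: "x \<in> space M" and v: "v \<in> \<Theta>"
  shows "partial i (partial j (\<lambda>w. p w x)) v
     = p v x * (partial i (logp p x) v * partial j (logp p x) v + partial i (partial j (logp p x)) v)"
proof -
  have "partial i (partial j (\<lambda>w. p w x)) v = partial i (\<lambda>w. p w x * partial j (logp p x) w) v"
    using partial_cong_open(1)[OF open_parameters v partial_density(2)[OF x]] .
  also have "\<dots> = partial i (\<lambda>w. p w x) v * partial j (logp p x) v + p v x * partial i (partial j (logp p x)) v"
    using has_partial_mult(2)[OF partial_density(1)[OF x v] Ck_on_3_has_partial(2)[OF logp_Ck_on_3[OF x] v]] .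
  finally show ?thesis
    using partial_density(2)[OF x v] by (simp add: algebra_simps)
qed

lemma score_mean_zero:
  assumes v: "v \<in> \<Theta>"
  shows "integrable M (\<lambda>x. partial i (logp p x) v * p v x)"
    and "(\<integral>x. partial i (logp p x) v * p v x \<partial>M) = 0"
proof -
  have eq: "partial i (\<lambda>w. p w x) v = partial i (logp p x) v * p v x" if "x \<in> space M" for x
    using partial_density(2)[OF that v] by simp
  have "integrable M (\<lambda>x. partial i (\<lambda>w. p w x) v)" "(\<integral>x. partial i (\<lambda>w. p w x) v \<partial>M) = 0"
    using model v by (auto simp: stat_model_def)
  moreover have "integrable M (\<lambda>x. partial i (\<lambda>w. p w x) v) \<longleftrightarrow> integrable M (\<lambda>x. partial i (logp p x) v * p v x)"
    by (rule Bochner_Integration.integrable_cong) (simp_all add: eq)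
  moreover have "(\<integral>x. partial i (\<lambda>w. p w x) v \<partial>M) = (\<integral>x. partial i (logp p x) v * p v x \<partial>M)"
    by (rule Bochner_Integration.integral_cong) (simp_all add: eq)
  ultimately show "integrable M (\<lambda>x. partial i (logp p x) v * p v x)"
    and "(\<integral>x. partial i (logp p x) v * p v x \<partial>M) = 0"
    by simp_all
qed

lemma score_square_integrable:
  "v \<in> \<Theta> \<Longrightarrow> integrable M (\<lambda>x. (partial i (logp p x) v)\<^sup>2 * p v x)"
  using model by (simp add: stat_model_def)

lemma score_product_integrable:
  assumes v: "v \<in> \<Theta>"
  shows "integrable M (\<lambda>x. partial i (logp p x) v * partial j (logp p x) v * p v x)"
proof (rule Bochner_Integration.integrable_bound)
  show "integrable M (\<lambda>x. (partial i (logp p x) v)\<^sup>2 * p v x + (partial j (logp p x) v)\<^sup>2 * p v x)"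
    using score_square_integrable[OF v] by auto
  show "(\<lambda>x. partial i (logp p x) v * partial j (logp p x) v * p v x) \<in> borel_measurable M"
    using borel_measurable_partial_logp(1)[OF v] p_measurable[OF v] by measurable
  have bound: "\<bar>a * b * c\<bar> \<le> a\<^sup>2 * c + b\<^sup>2 * c" if "0 < c" for a b c :: real
  proof -
    have "2 * (\<bar>a\<bar> * \<bar>b\<bar>) \<le> a\<^sup>2 + b\<^sup>2" "0 \<le> \<bar>a\<bar> * \<bar>b\<bar>"
      using sum_squares_bound[of "\<bar>a\<bar>" "\<bar>b\<bar>"] by (simp_all add: mult.assoc)
    then have "\<bar>a\<bar> * \<bar>b\<bar> \<le> a\<^sup>2 + b\<^sup>2"
      by linarith
    then show ?thesis
      using that by (simp add: abs_mult distrib_right[symmetric] mult_right_mono)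
  qed
  then show "AE x in M. norm (partial i (logp p x) v * partial j (logp p x) v * p v x)
      \<le> norm ((partial i (logp p x) v)\<^sup>2 * p v x + (partial j (logp p x) v)\<^sup>2 * p v x)"
    using p_pos[OF v] by (auto intro!: AE_I2 order.trans[OF bound abs_ge_self])
qed

lemma hessian_mean_eq_neg_fisher:
  assumes v: "v \<in> \<Theta>"
  shows "integrable M (\<lambda>x. partial i (partial j (logp p x)) v * p v x)"
    and "(\<integral>x. partial i (partial j (logp p x)) v * p v x \<partial>M) = - fisher M p v $ i $ j"
proof -
  have eq: "partial i (partial j (logp p x)) v * p v x
      = partial i (partial j (\<lambda>w. p w x)) v - partial i (logp p x) v * partial j (logp p x) v * p v x"
    if "x \<in> space M" for x
    using second_partial_density[OF that v] by (simp add: algebra_simps)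
  have "integrable M (\<lambda>x. partial i (partial j (\<lambda>w. p w x)) v)" "(\<integral>x. partial i (partial j (\<lambda>w. p w x)) v \<partial>M) = 0"
    using model v by (auto simp: stat_model_def)
  moreover note score_product_integrable[OF v, of i j]
  moreover have "integrable M (\<lambda>x. partial i (partial j (logp p x)) v * p v x) \<longleftrightarrow>
      integrable M (\<lambda>x. partial i (partial j (\<lambda>w. p w x)) v - partial i (logp p x) v * partial j (logp p x) v * p v x)"
    by (rule Bochner_Integration.integrable_cong) (simp_all add: eq)
  moreover have "(\<integral>x. partial i (partial j (logp p x)) v * p v x \<partial>M) =
      (\<integral>x. partial i (partial j (\<lambda>w. p w x)) v - partial i (logp p x) v * partial j (logp p x) v * p v x \<partial>M)"
    by (rule Bochner_Integration.integral_cong) (simp_all add: eq)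
  ultimately show "integrable M (\<lambda>x. partial i (partial j (logp p x)) v * p v x)"
    and "(\<integral>x. partial i (partial j (logp p x)) v * p v x \<partial>M) = - fisher M p v $ i $ j"
    by (simp_all add: fisher_def)
qed

lemma moment_conditions_integrable:
  assumes "moment_conditions M p \<Theta> \<theta>" "\<theta> \<in> \<Theta>"
  shows "integrable M (\<lambda>x. (partial i (partial j (logp p x)) \<theta>)\<^sup>2 * p \<theta> x)"
    and "integrable M (\<lambda>x. \<bar>partial i (partial j (partial k (logp p x))) \<theta>\<bar> * p \<theta> x)"
proof -
  obtain N where "\<theta> \<in> N"
    and N2: "(SUP v\<in>N. \<integral>\<^sup>+ x. ennreal ((partial i (partial j (logp p x)) v)\<^sup>2 * p v x) \<partial>M) < \<infinity>"
    and N3: "(SUP v\<in>N. \<integral>\<^sup>+ x. ennreal (\<bar>partial i (partial j (partial k (logp p x))) v\<bar> * p v x) \<partial>M) < \<infinity>"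
    using assms(1) interior_subset unfolding moment_conditions_def by blast
  have [measurable]: "p \<theta> \<in> borel_measurable M"
    "(\<lambda>x. partial i (partial j (logp p x)) \<theta>) \<in> borel_measurable M"
    "(\<lambda>x. partial i (partial j (partial k (logp p x))) \<theta>) \<in> borel_measurable M"
    using p_measurable borel_measurable_partial_logp assms(2) by blast+
  show "integrable M (\<lambda>x. (partial i (partial j (logp p x)) \<theta>)\<^sup>2 * p \<theta> x)"
    by (rule integrable_if_SUP_nn_integral_finite[OF \<open>\<theta> \<in> N\<close> N2])
       (auto intro!: mult_nonneg_nonneg less_imp_le[OF p_pos] assms(2))
  show "integrable M (\<lambda>x. \<bar>partial i (partial j (partial k (logp p x))) \<theta>\<bar> * p \<theta> x)"
    by (rule integrable_if_SUP_nn_integral_finite[OF \<open>\<theta> \<in> N\<close> N3])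
       (auto intro!: mult_nonneg_nonneg less_imp_le[OF p_pos] assms(2))
qed

lemma has_partial_christoffel:
  assumes v: "v \<in> \<Theta>" and inv: "invertible (fisher M p v)"
  shows "has_partial k (christoffel M p m i j) v"
proof -
  have "has_partial k (\<lambda>w. fisher_inv M p w $ m $ l) v" for l
    unfolding fisher_inv_def using inv invertible_det_nz
    by (intro has_partial_matrix_inv Ck_on_2_has_partial(1)[OF fisher_Ck_on_2 v]) auto
  then show ?thesis
    unfolding christoffel_def
    by (intro has_partial_cmult(1) has_partial_sum(1) has_partial_mult(1) has_partial_add(1)
        has_partial_diff(1) Ck_on_2_has_partial(2)[OF fisher_Ck_on_2 v]) auto
qed

end

section \<open>Derivatives of the log-likelihood\<close>

lemma partial_covHess:
  assumes "has_partial k (partial i (partial j L)) v" "\<And>m. has_partial k (partial m L) v"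
    and "\<And>m. has_partial k (christoffel M p m i j) v"
  shows "partial k (covHess M p L i j) v = partial k (partial i (partial j L)) v
     - (\<Sum>m\<in>UNIV. partial k (christoffel M p m i j) v * partial m L v
                  + christoffel M p m i j v * partial k (partial m L) v)"
proof -
  have "has_partial k (\<lambda>w. \<Sum>m\<in>UNIV. christoffel M p m i j w * partial m L w) v"
    "partial k (\<lambda>w. \<Sum>m\<in>UNIV. christoffel M p m i j w * partial m L w) v
      = (\<Sum>m\<in>UNIV. partial k (christoffel M p m i j) v * partial m L v
                  + christoffel M p m i j v * partial k (partial m L) v)"
    using has_partial_sum[of UNIV k "\<lambda>m w. christoffel M p m i j w * partial m L w" v]
      has_partial_mult[OF assms(3) assms(2)] by auto
  then show ?thesis
    unfolding covHess_def[abs_def] using has_partial_diff[OF assms(1)] by simp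
qed

locale sampled_model = statistical_model M p \<Theta> + iid_sample P M X "p \<theta>"
  for M :: "'a measure" and p :: "real^'d::finite \<Rightarrow> 'a \<Rightarrow> real" and \<Theta> :: "(real^'d) set"
    and P :: "'w measure" and X :: "nat \<Rightarrow> 'w \<Rightarrow> 'a" and \<theta> :: "real^'d" +
  assumes regular: "\<theta> \<in> Theta_reg M p \<Theta>" and moments: "moment_conditions M p \<Theta> \<theta>"
begin

lemma theta_in_parameters: "\<theta> \<in> \<Theta>"
  using regular by (simp add: Theta_reg_def)

lemma fisher_invertible: "invertible (fisher M p \<theta>)"
  using regular by (intro invertible_if_lambda_min_pos) (simp add: Theta_reg_def)

lemma loglik_partials:
  assumes "\<omega> \<in> space P"
  shows "partial i (loglik p X n \<omega>) \<theta> = (\<Sum>t<n. partial i (logp p (X t \<omega>)) \<theta>)"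
    and "partial i (partial j (loglik p X n \<omega>)) \<theta> = (\<Sum>t<n. partial i (partial j (logp p (X t \<omega>))) \<theta>)"
    and "partial i (partial j (partial k (loglik p X n \<omega>))) \<theta>
      = (\<Sum>t<n. partial i (partial j (partial k (logp p (X t \<omega>)))) \<theta>)"
    and "has_partial i (partial j (loglik p X n \<omega>)) \<theta>"
    and "has_partial i (partial j (partial k (loglik p X n \<omega>))) \<theta>"
proof -
  have "loglik p X n \<omega> = (\<lambda>v. \<Sum>t\<in>{..<n}. logp p (X t \<omega>) v)"
    by (simp add: loglik_def logp_def)
  moreover have "Ck_on 3 \<Theta> (logp p (X t \<omega>))" for t
    using logp_Ck_on_3 measurable_space[OF X_measurable assms] by blast
  ultimately show "partial i (loglik p X n \<omega>) \<theta> = (\<Sum>t<n. partial i (logp p (X t \<omega>)) \<theta>)"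
    and "partial i (partial j (loglik p X n \<omega>)) \<theta> = (\<Sum>t<n. partial i (partial j (logp p (X t \<omega>))) \<theta>)"
    and "partial i (partial j (partial k (loglik p X n \<omega>))) \<theta>
      = (\<Sum>t<n. partial i (partial j (partial k (logp p (X t \<omega>)))) \<theta>)"
    and "has_partial i (partial j (loglik p X n \<omega>)) \<theta>"
    and "has_partial i (partial j (partial k (loglik p X n \<omega>))) \<theta>"
    using partials_sum_Ck_on_3[OF open_parameters finite_lessThan _ theta_in_parameters] by simp_all
qed

lemma covHess_loglik:
  assumes "\<omega> \<in> space P"
  shows "covHess M p (loglik p X n \<omega>) i j \<theta> = (\<Sum>t<n. partial i (partial j (logp p (X t \<omega>))) \<theta>)
    - (\<Sum>m\<in>UNIV. christoffel M p m i j \<theta> * (\<Sum>t<n. partial m (logp p (X t \<omega>)) \<theta>))"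
  using loglik_partials[OF assms] by (simp add: covHess_def)

lemma cov3_loglik:
  assumes "\<omega> \<in> space P"
  shows "cov3 M p (loglik p X n \<omega>) i j k \<theta> = (\<Sum>t<n. partial k (partial i (partial j (logp p (X t \<omega>)))) \<theta>)
    - (\<Sum>m\<in>UNIV. partial k (christoffel M p m i j) \<theta> * (\<Sum>t<n. partial m (logp p (X t \<omega>)) \<theta>)
                 + christoffel M p m i j \<theta> * (\<Sum>t<n. partial k (partial m (logp p (X t \<omega>))) \<theta>))
    - (\<Sum>m\<in>UNIV. christoffel M p m k i \<theta> * covHess M p (loglik p X n \<omega>) m j \<theta>)
    - (\<Sum>m\<in>UNIV. christoffel M p m k j \<theta> * covHess M p (loglik p X n \<omega>) i m \<theta>)"
  using partial_covHess[OF loglik_partials(5)[OF assms] loglik_partials(4)[OF assms]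
      has_partial_christoffel[OF theta_in_parameters fisher_invertible]]
  by (simp add: cov3_def loglik_partials[OF assms])

lemma borel_measurable_logp_sums[measurable]:
  "(\<lambda>\<omega>. \<Sum>t<n. partial i (logp p (X t \<omega>)) \<theta>) \<in> borel_measurable P"
  "(\<lambda>\<omega>. \<Sum>t<n. partial i (partial j (logp p (X t \<omega>))) \<theta>) \<in> borel_measurable P"
  "(\<lambda>\<omega>. \<Sum>t<n. partial i (partial j (partial k (logp p (X t \<omega>)))) \<theta>) \<in> borel_measurable P"
  using borel_measurable_partial_logp[OF theta_in_parameters] by measurable

lemma borel_measurable_loglik_derivatives[measurable]:
  "(\<lambda>\<omega>. partial i (loglik p X n \<omega>) \<theta>) \<in> borel_measurable P"
  "(\<lambda>\<omega>. covHess M p (loglik p X n \<omega>) i j \<theta>) \<in> borel_measurable P"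
  "(\<lambda>\<omega>. cov3 M p (loglik p X n \<omega>) i j k \<theta>) \<in> borel_measurable P"
proof -
  show "(\<lambda>\<omega>. partial i (loglik p X n \<omega>) \<theta>) \<in> borel_measurable P"
    by (subst measurable_cong[OF loglik_partials(1)]) measurable
  have H[measurable]: "(\<lambda>\<omega>. covHess M p (loglik p X n \<omega>) i j \<theta>) \<in> borel_measurable P" for i j
    by (subst measurable_cong[OF covHess_loglik]) measurable
  then show "(\<lambda>\<omega>. covHess M p (loglik p X n \<omega>) i j \<theta>) \<in> borel_measurable P" .
  show "(\<lambda>\<omega>. cov3 M p (loglik p X n \<omega>) i j k \<theta>) \<in> borel_measurable P"
    by (subst measurable_cong[OF cov3_loglik]) measurable
qed

lemma score_average_vanishes:
  "vanishes_in_prob P (\<lambda>n \<omega>. (\<Sum>t<n. partial i (logp p (X t \<omega>)) \<theta>) / real n)"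
  using sample_average_minus_mean_vanishes[OF borel_measurable_partial_logp(1) score_mean_zero(1) score_square_integrable,
      OF theta_in_parameters theta_in_parameters theta_in_parameters]
  by (simp add: score_mean_zero(2)[OF theta_in_parameters])

lemma hessian_average_plus_fisher_vanishes:
  "vanishes_in_prob P (\<lambda>n \<omega>. (\<Sum>t<n. partial i (partial j (logp p (X t \<omega>))) \<theta>) / real n + fisher M p \<theta> $ i $ j)"
  using sample_average_minus_mean_vanishes[OF borel_measurable_partial_logp(2) hessian_mean_eq_neg_fisher(1)
      moment_conditions_integrable(1)[OF moments], OF theta_in_parameters theta_in_parameters theta_in_parameters]
  by (simp add: hessian_mean_eq_neg_fisher(2)[OF theta_in_parameters])

lemma third_derivative_average_bounded:
  "bounded_in_prob P (\<lambda>n \<omega>. (\<Sum>t<n. partial i (partial j (partial k (logp p (X t \<omega>)))) \<theta>) / real n)"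
  by (rule sample_average_bounded[OF borel_measurable_partial_logp(3) moment_conditions_integrable(2)[OF moments],
      OF theta_in_parameters theta_in_parameters])

lemma covHess_loglik_average_plus_fisher_vanishes:
  "vanishes_in_prob P (\<lambda>n \<omega>. covHess M p (loglik p X n \<omega>) i j \<theta> / real n + fisher M p \<theta> $ i $ j)"
proof (rule vanishes_in_prob_cong)
  show "vanishes_in_prob P (\<lambda>n \<omega>. ((\<Sum>t<n. partial i (partial j (logp p (X t \<omega>))) \<theta>) / real n + fisher M p \<theta> $ i $ j)
      - (\<Sum>m\<in>UNIV. christoffel M p m i j \<theta> * ((\<Sum>t<n. partial m (logp p (X t \<omega>)) \<theta>) / real n)))"
    by (intro vanishes_in_prob_diff hessian_average_plus_fisher_vanishes vanishes_in_prob_sum vanishes_in_prob_cmult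
        score_average_vanishes) simp
  show "\<forall>\<^sub>F n in sequentially. \<forall>\<omega>\<in>space P.
      ((\<Sum>t<n. partial i (partial j (logp p (X t \<omega>))) \<theta>) / real n + fisher M p \<theta> $ i $ j)
        - (\<Sum>m\<in>UNIV. christoffel M p m i j \<theta> * ((\<Sum>t<n. partial m (logp p (X t \<omega>)) \<theta>) / real n))
      = covHess M p (loglik p X n \<omega>) i j \<theta> / real n + fisher M p \<theta> $ i $ j"
    by (intro always_eventually allI ballI) (simp add: covHess_loglik diff_divide_distrib times_divide_eq_right sum_divide_distrib[symmetric])
qed measurable

lemma covHess_loglik_average_bounded:
  "bounded_in_prob P (\<lambda>n \<omega>. covHess M p (loglik p X n \<omega>) i j \<theta> / real n)"
proof (rule bounded_in_prob_cong)
  show "bounded_in_prob P (\<lambda>n \<omega>. (covHess M p (loglik p X n \<omega>) i j \<theta> / real n + fisher M p \<theta> $ i $ j)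
      - fisher M p \<theta> $ i $ j)"
    by (intro bounded_in_prob_diff vanishes_imp_bounded_in_prob covHess_loglik_average_plus_fisher_vanishes bounded_in_prob_const)
qed simp

lemma cov3_loglik_average_bounded:
  "bounded_in_prob P (\<lambda>n \<omega>. cov3 M p (loglik p X n \<omega>) i j k \<theta> / real n)"
proof (rule bounded_in_prob_cong)
  show "bounded_in_prob P (\<lambda>n \<omega>. (\<Sum>t<n. partial k (partial i (partial j (logp p (X t \<omega>)))) \<theta>) / real n
      - (\<Sum>m\<in>UNIV. partial k (christoffel M p m i j) \<theta> * ((\<Sum>t<n. partial m (logp p (X t \<omega>)) \<theta>) / real n)
          + christoffel M p m i j \<theta> * ((\<Sum>t<n. partial k (partial m (logp p (X t \<omega>))) \<theta>) / real n
                                         + fisher M p \<theta> $ k $ m - fisher M p \<theta> $ k $ m))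
      - (\<Sum>m\<in>UNIV. christoffel M p m k i \<theta> * (covHess M p (loglik p X n \<omega>) m j \<theta> / real n))
      - (\<Sum>m\<in>UNIV. christoffel M p m k j \<theta> * (covHess M p (loglik p X n \<omega>) i m \<theta> / real n)))"
    by (intro bounded_in_prob_diff bounded_in_prob_add bounded_in_prob_sum bounded_in_prob_cmult
        bounded_in_prob_const third_derivative_average_bounded covHess_loglik_average_bounded
        score_average_vanishes[THEN vanishes_imp_bounded_in_prob]
        hessian_average_plus_fisher_vanishes[THEN vanishes_imp_bounded_in_prob]) simp_all
qed (simp add: cov3_loglik diff_divide_distrib add_divide_distrib[symmetric] times_divide_eq_right
    sum_divide_distrib[symmetric])

end

section \<open>Identification of the second-order term\<close>

text \<open>Each summand on the right pairs a factor that vanishes in probability with a bounded one.\<close>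

lemma second_order_identity:
  fixes g gi :: "real^'d::finite^'d" and A B \<Delta> :: "real^'d" and U :: "'d \<Rightarrow> real"
    and H :: "'d \<Rightarrow> 'd \<Rightarrow> real" and K :: "'d \<Rightarrow> 'd \<Rightarrow> 'd \<Rightarrow> real"
  assumes n: "n > 0" and inverse: "g ** gi = mat 1"
  shows "(g *v B) $ i - (\<Sum>j\<in>UNIV. (1 / sqrt (real n)) * (H i j + real n * g$i$j) * A$j)
      - (1/2) * (\<Sum>j\<in>UNIV. \<Sum>k\<in>UNIV. (1 / real n) * K i j k * A$j * A$k)
    = - (U i + (\<Sum>j\<in>UNIV. H i j * \<Delta>$j) + (1/2) * (\<Sum>j\<in>UNIV. \<Sum>k\<in>UNIV. K i j k * \<Delta>$j * \<Delta>$k))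
      - (\<Sum>j\<in>UNIV. g$i$j * ((A - (1 / sqrt (real n)) *\<^sub>R (gi *v (\<chi> i. U i)))$j / (1 / sqrt (real n))))
      + (\<Sum>j\<in>UNIV. (H i j / real n + g$i$j) * B$j)
      + (\<Sum>j\<in>UNIV. ((\<Delta> - (1 / sqrt (real n)) *\<^sub>R A - (1 / real n) *\<^sub>R B)$j / (1 / real n)) * (H i j / real n))
      + (1/2) * (\<Sum>j\<in>UNIV. \<Sum>k\<in>UNIV. (real n * \<Delta>$j * \<Delta>$k - A$j * A$k) * (K i j k / real n))"
    (is "?lhs = ?rhs")
proof -
  define s where "s = sqrt (real n)"
  have s: "s > 0" "s * s = real n" "real n / s = s"
    using n by (auto simp: s_def real_sqrt_mult_self real_div_sqrt)
  have "(\<Sum>j\<in>UNIV. g$i$j * (gi *v (\<chi> i. U i))$j) = (g *v (gi *v (\<chi> i. U i))) $ i"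
    by (simp add: matrix_vector_mult_def)
  then have gU: "(\<Sum>j\<in>UNIV. g$i$j * (gi *v (\<chi> i. U i))$j) = U i"
    by (simp add: matrix_vector_mul_assoc inverse)
  have "(\<Sum>j\<in>UNIV. g$i$j * ((A - (1 / s) *\<^sub>R (gi *v (\<chi> i. U i)))$j / (1 / s)))
      = (\<Sum>j\<in>UNIV. s * (g$i$j * A$j) - g$i$j * (gi *v (\<chi> i. U i))$j)"
    using s(1) by (intro sum.cong refl) (simp add: field_simps)
  then have linear: "(\<Sum>j\<in>UNIV. g$i$j * ((A - (1 / s) *\<^sub>R (gi *v (\<chi> i. U i)))$j / (1 / s)))
      = s * (\<Sum>j\<in>UNIV. g$i$j * A$j) - U i"
    by (simp add: sum_subtractf sum_distrib_left gU)
  have first_order: "(H i j / real n + g$i$j) * B$j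
      + ((\<Delta> - (1 / s) *\<^sub>R A - (1 / real n) *\<^sub>R B)$j / (1 / real n)) * (H i j / real n)
      - H i j * \<Delta>$j - s * (g$i$j * A$j)
    = g$i$j * B$j - (1 / s) * (H i j + real n * g$i$j) * A$j" for j
    using s n by (simp add: field_simps)
  have second_order: "(real n * \<Delta>$j * \<Delta>$k - A$j * A$k) * (K i j k / real n) - K i j k * \<Delta>$j * \<Delta>$k
    = - ((1 / real n) * K i j k * A$j * A$k)" for j k
    using n by (simp add: field_simps)
  have "?rhs = (\<Sum>j\<in>UNIV. (H i j / real n + g$i$j) * B$j
        + ((\<Delta> - (1 / s) *\<^sub>R A - (1 / real n) *\<^sub>R B)$j / (1 / real n)) * (H i j / real n)
        - H i j * \<Delta>$j - s * (g$i$j * A$j))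
      + (1/2) * (\<Sum>j\<in>UNIV. \<Sum>k\<in>UNIV. (real n * \<Delta>$j * \<Delta>$k - A$j * A$k) * (K i j k / real n)
        - K i j k * \<Delta>$j * \<Delta>$k)"
    unfolding s_def[symmetric] linear
    by (simp add: sum.distrib sum_subtractf sum_distrib_left algebra_simps)
  also have "\<dots> = (\<Sum>j\<in>UNIV. g$i$j * B$j - (1 / s) * (H i j + real n * g$i$j) * A$j)
      + (1/2) * (\<Sum>j\<in>UNIV. \<Sum>k\<in>UNIV. - ((1 / real n) * K i j k * A$j * A$k))"
    by (simp only: first_order second_order)
  also have "\<dots> = ?lhs"
    by (simp add: s_def matrix_vector_mult_def sum_subtractf sum_negf)
  finally show ?thesis ..
qed

lemma (in prob_space) vanishes_in_prob_rescaled_product: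
  fixes a a' b b' d d' :: "nat \<Rightarrow> 'a \<Rightarrow> real"
  assumes bounded: "bounded_in_prob M a" "bounded_in_prob M a'" "bounded_in_prob M b" "bounded_in_prob M b'"
    and remainder: "vanishes_in_prob M (\<lambda>n \<omega>. (d n \<omega> - a n \<omega> / sqrt (real n) - b n \<omega> / real n) * real n)"
      "vanishes_in_prob M (\<lambda>n \<omega>. (d' n \<omega> - a' n \<omega> / sqrt (real n) - b' n \<omega> / real n) * real n)"
    and [measurable]: "\<And>n. d n \<in> borel_measurable M" "\<And>n. d' n \<in> borel_measurable M"
  shows "vanishes_in_prob M (\<lambda>n \<omega>. real n * d n \<omega> * d' n \<omega> - a n \<omega> * a' n \<omega>)"
proof (rule vanishes_in_prob_cong)
  define c where "c n \<omega> = b n \<omega> + (d n \<omega> - a n \<omega> / sqrt (real n) - b n \<omega> / real n) * real n" for n \<omega>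
  define c' where "c' n \<omega> = b' n \<omega> + (d' n \<omega> - a' n \<omega> / sqrt (real n) - b' n \<omega> / real n) * real n" for n \<omega>
  have "bounded_in_prob M c" "bounded_in_prob M c'"
    unfolding c_def c'_def
    by (intro bounded_in_prob_add bounded(3,4) remainder[THEN vanishes_imp_bounded_in_prob])+
  moreover have "(\<lambda>n. 1 / sqrt (real n)) \<longlonglongrightarrow> 0"
    using tendsto_real_sqrt[OF lim_1_over_n] by (simp add: real_sqrt_divide)
  ultimately show "vanishes_in_prob M (\<lambda>n \<omega>. (1 / sqrt (real n)) * (a n \<omega> * c' n \<omega> + c n \<omega> * a' n \<omega>)
      + (1 / real n) * (c n \<omega> * c' n \<omega>))"
    using bounded by (intro vanishes_in_prob_add vanishes_in_prob_mult vanishes_in_prob_LIMSEQ lim_1_over_n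
        bounded_in_prob_add bounded_in_prob_mult)
  show "\<forall>\<^sub>F n in sequentially. \<forall>\<omega>\<in>space M. (1 / sqrt (real n)) * (a n \<omega> * c' n \<omega> + c n \<omega> * a' n \<omega>)
      + (1 / real n) * (c n \<omega> * c' n \<omega>) = real n * d n \<omega> * d' n \<omega> - a n \<omega> * a' n \<omega>"
    using eventually_gt_at_top[of 0]
  proof eventually_elim
    case (elim n)
    have identity: "(1/s) * (x * y' + y * x') + (1/(s * s)) * (y * y')
        = (s * s) * (x/s + y/(s * s)) * (x'/s + y'/(s * s)) - x * x'" if "s > 0" for s x x' y y' :: real
      using that by (simp add: field_simps)
    have "d n \<omega> = a n \<omega> / sqrt (real n) + c n \<omega> / real n" "d' n \<omega> = a' n \<omega> / sqrt (real n) + c' n \<omega> / real n"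
      for \<omega>
      using elim by (simp_all add: c_def c'_def field_simps)
    then show ?case
      using identity[of "sqrt (real n)" "a n \<omega>" "c' n \<omega>" "c n \<omega>" "a' n \<omega>" for \<omega>] elim by simp
  qed
qed (use bounded in \<open>measurable, auto dest: bounded_in_prob_measurable\<close>)

lemma (in prob_space) second_order_term_vanishes:
  fixes g gi :: "real^'d::finite^'d" and \<theta> :: "real^'d" and \<theta>hat A B :: "nat \<Rightarrow> 'a \<Rightarrow> real^'d"
    and u :: "nat \<Rightarrow> 'a \<Rightarrow> 'd \<Rightarrow> real" and H :: "nat \<Rightarrow> 'a \<Rightarrow> 'd \<Rightarrow> 'd \<Rightarrow> real"
    and K :: "nat \<Rightarrow> 'a \<Rightarrow> 'd \<Rightarrow> 'd \<Rightarrow> 'd \<Rightarrow> real"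
  assumes inverse: "g ** gi = mat 1"
    and [measurable]: "\<And>n. \<theta>hat n \<in> borel_measurable M" "\<And>n. A n \<in> borel_measurable M"
      "\<And>n. B n \<in> borel_measurable M" "\<And>n i. (\<lambda>\<omega>. u n \<omega> i) \<in> borel_measurable M"
      "\<And>n i j. (\<lambda>\<omega>. H n \<omega> i j) \<in> borel_measurable M" "\<And>n i j k. (\<lambda>\<omega>. K n \<omega> i j k) \<in> borel_measurable M"
    and H_lln: "\<And>i j. vanishes_in_prob M (\<lambda>n \<omega>. H n \<omega> i j / real n + g $ i $ j)"
    and K_bounded: "\<And>i j k. bounded_in_prob M (\<lambda>n \<omega>. K n \<omega> i j k / real n)"
    and A_bounded: "\<And>j. bounded_in_prob M (\<lambda>n \<omega>. A n \<omega> $ j)"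
    and B_bounded: "\<And>j. bounded_in_prob M (\<lambda>n \<omega>. B n \<omega> $ j)"
    and score_remainder: "\<And>i. vanishes_in_prob M (\<lambda>n \<omega>. u n \<omega> i
          + (\<Sum>j\<in>UNIV. H n \<omega> i j * (\<theta>hat n \<omega> - \<theta>) $ j)
          + (1/2) * (\<Sum>j\<in>UNIV. \<Sum>k\<in>UNIV. K n \<omega> i j k * (\<theta>hat n \<omega> - \<theta>) $ j * (\<theta>hat n \<omega> - \<theta>) $ k))"
    and A_remainder: "\<And>j. vanishes_in_prob M
          (\<lambda>n \<omega>. (A n \<omega> - (1 / sqrt (real n)) *\<^sub>R (gi *v (\<chi> i. u n \<omega> i))) $ j / (1 / sqrt (real n)))"
    and estimator_remainder: "\<And>j. vanishes_in_prob M
          (\<lambda>n \<omega>. ((\<theta>hat n \<omega> - \<theta>) - (1 / sqrt (real n)) *\<^sub>R A n \<omega> - (1 / real n) *\<^sub>R B n \<omega>) $ j / (1 / real n))"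
  shows "vanishes_in_prob M (\<lambda>n \<omega>. (g *v B n \<omega>) $ i
          - (\<Sum>j\<in>UNIV. (1 / sqrt (real n)) * (H n \<omega> i j + real n * g $ i $ j) * A n \<omega> $ j)
          - (1/2) * (\<Sum>j\<in>UNIV. \<Sum>k\<in>UNIV. (1 / real n) * K n \<omega> i j k * A n \<omega> $ j * A n \<omega> $ k))"
proof (rule vanishes_in_prob_cong)
  define \<Delta> where "\<Delta> n \<omega> = \<theta>hat n \<omega> - \<theta>" for n \<omega>
  define D where "D n \<omega> = \<Delta> n \<omega> - (1 / sqrt (real n)) *\<^sub>R A n \<omega> - (1 / real n) *\<^sub>R B n \<omega>" for n \<omega>
  define V where "V n \<omega> = A n \<omega> - (1 / sqrt (real n)) *\<^sub>R (gi *v (\<chi> i. u n \<omega> i))" for n \<omega>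
  define E where "E i n \<omega> = u n \<omega> i + (\<Sum>j\<in>UNIV. H n \<omega> i j * \<Delta> n \<omega> $ j)
      + (1/2) * (\<Sum>j\<in>UNIV. \<Sum>k\<in>UNIV. K n \<omega> i j k * \<Delta> n \<omega> $ j * \<Delta> n \<omega> $ k)" for i n \<omega>
  have n_pos: "\<forall>\<^sub>F n in sequentially. n > 0"
    by (rule eventually_gt_at_top)
  have W: "vanishes_in_prob M (\<lambda>n \<omega>. real n * \<Delta> n \<omega> $ j * \<Delta> n \<omega> $ k - A n \<omega> $ j * A n \<omega> $ k)" for j k
    using estimator_remainder[of j] estimator_remainder[of k]
    by (intro vanishes_in_prob_rescaled_product A_bounded) (simp_all add: \<Delta>_def B_bounded)
  have H_bounded: "bounded_in_prob M (\<lambda>n \<omega>. H n \<omega> i j / real n)" for i j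
    by (rule bounded_in_prob_cong[OF bounded_in_prob_diff[OF vanishes_imp_bounded_in_prob[OF H_lln[of i j]]
          bounded_in_prob_const[of "g $ i $ j"]]]) simp
  show "vanishes_in_prob M (\<lambda>n \<omega>. - E i n \<omega>
      - (\<Sum>j\<in>UNIV. g$i$j * (V n \<omega> $ j / (1 / sqrt (real n))))
      + (\<Sum>j\<in>UNIV. (H n \<omega> i j / real n + g$i$j) * B n \<omega> $ j)
      + (\<Sum>j\<in>UNIV. (D n \<omega> $ j / (1 / real n)) * (H n \<omega> i j / real n))
      + (1/2) * (\<Sum>j\<in>UNIV. \<Sum>k\<in>UNIV. (real n * \<Delta> n \<omega> $ j * \<Delta> n \<omega> $ k - A n \<omega> $ j * A n \<omega> $ k)
                                       * (K n \<omega> i j k / real n)))"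
    using score_remainder[folded \<Delta>_def, folded E_def] A_remainder[folded V_def]
      estimator_remainder[folded \<Delta>_def, folded D_def]
    by (intro vanishes_in_prob_add vanishes_in_prob_diff vanishes_in_prob_cmult[of _ "-1", simplified]
        vanishes_in_prob_sum vanishes_in_prob_cmult vanishes_in_prob_mult H_lln B_bounded
        H_bounded W K_bounded) simp_all
  show "\<forall>\<^sub>F n in sequentially. \<forall>\<omega>\<in>space M. - E i n \<omega>
      - (\<Sum>j\<in>UNIV. g$i$j * (V n \<omega> $ j / (1 / sqrt (real n))))
      + (\<Sum>j\<in>UNIV. (H n \<omega> i j / real n + g$i$j) * B n \<omega> $ j)
      + (\<Sum>j\<in>UNIV. (D n \<omega> $ j / (1 / real n)) * (H n \<omega> i j / real n))
      + (1/2) * (\<Sum>j\<in>UNIV. \<Sum>k\<in>UNIV. (real n * \<Delta> n \<omega> $ j * \<Delta> n \<omega> $ k - A n \<omega> $ j * A n \<omega> $ k)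
                                       * (K n \<omega> i j k / real n))
    = (g *v B n \<omega>) $ i
      - (\<Sum>j\<in>UNIV. (1 / sqrt (real n)) * (H n \<omega> i j + real n * g $ i $ j) * A n \<omega> $ j)
      - (1/2) * (\<Sum>j\<in>UNIV. \<Sum>k\<in>UNIV. (1 / real n) * K n \<omega> i j k * A n \<omega> $ j * A n \<omega> $ k)"
    using n_pos by eventually_elim
      (intro ballI, unfold E_def V_def D_def, rule second_order_identity[OF _ inverse, symmetric])
qed (simp add: matrix_vector_mult_def)

lemma (in prob_space) second_order_term_identification:
  fixes g gi :: "real^'d::finite^'d" and \<theta> :: "real^'d" and \<theta>hat A B :: "nat \<Rightarrow> 'a \<Rightarrow> real^'d"
    and u :: "nat \<Rightarrow> 'a \<Rightarrow> 'd \<Rightarrow> real" and H :: "nat \<Rightarrow> 'a \<Rightarrow> 'd \<Rightarrow> 'd \<Rightarrow> real"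
    and K :: "nat \<Rightarrow> 'a \<Rightarrow> 'd \<Rightarrow> 'd \<Rightarrow> 'd \<Rightarrow> real"
  assumes inverse: "g ** gi = mat 1"
    and meas[measurable]: "\<And>n. \<theta>hat n \<in> borel_measurable M" "\<And>n. A n \<in> borel_measurable M"
      "\<And>n. B n \<in> borel_measurable M" "\<And>n i. (\<lambda>\<omega>. u n \<omega> i) \<in> borel_measurable M"
      "\<And>n i j. (\<lambda>\<omega>. H n \<omega> i j) \<in> borel_measurable M" "\<And>n i j k. (\<lambda>\<omega>. K n \<omega> i j k) \<in> borel_measurable M"
    and H_lln: "\<And>i j. vanishes_in_prob M (\<lambda>n \<omega>. H n \<omega> i j / real n + g $ i $ j)"
    and K_bounded: "\<And>i j k. bounded_in_prob M (\<lambda>n \<omega>. K n \<omega> i j k / real n)"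
    and expansion: "o_p M (\<lambda>n \<omega>. (\<theta>hat n \<omega> - \<theta>) - (1 / sqrt (real n)) *\<^sub>R A n \<omega>
                                    - (1 / real n) *\<^sub>R B n \<omega>) (\<lambda>n. 1 / real n)"
    and A_bdd: "O_p1 M A" and B_bdd: "O_p1 M B"
    and score_expansion: "\<And>i. o_p M (\<lambda>n \<omega>. u n \<omega> i
          + (\<Sum>j\<in>UNIV. H n \<omega> i j * (\<theta>hat n \<omega> - \<theta>) $ j)
          + (1/2) * (\<Sum>j\<in>UNIV. \<Sum>k\<in>UNIV. K n \<omega> i j k * (\<theta>hat n \<omega> - \<theta>) $ j * (\<theta>hat n \<omega> - \<theta>) $ k))
          (\<lambda>n. 1 / sqrt (real n))"
    and A_control: "o_p M (\<lambda>n \<omega>. A n \<omega> - (1 / sqrt (real n)) *\<^sub>R (gi *v (\<chi> i. u n \<omega> i)))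
                      (\<lambda>n. 1 / sqrt (real n))"
  shows "o_p M (\<lambda>n \<omega>. (g *v B n \<omega>) $ i
          - (\<Sum>j\<in>UNIV. (1 / sqrt (real n)) * (H n \<omega> i j + real n * g $ i $ j) * A n \<omega> $ j)
          - (1/2) * (\<Sum>j\<in>UNIV. \<Sum>k\<in>UNIV. (1 / real n) * K n \<omega> i j k * A n \<omega> $ j * A n \<omega> $ k))
          (\<lambda>n. 1)"
proof (rule vanishes_in_prob_imp_o_p, rule second_order_term_vanishes[OF inverse])
  have rates: "\<forall>\<^sub>F n in sequentially. 1 / sqrt (real n) > 0" "\<forall>\<^sub>F n in sequentially. 1 / real n > 0"
    using eventually_gt_at_top[of 0] by (auto elim: eventually_mono)
  have [measurable]: "(\<lambda>\<omega>. gi *v (\<chi> i. u n \<omega> i)) \<in> borel_measurable M" for n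
    by (subst borel_measurable_cart_iff, intro allI) (simp add: matrix_vector_mult_def, measurable)
  show "bounded_in_prob M (\<lambda>n \<omega>. A n \<omega> $ j)" "bounded_in_prob M (\<lambda>n \<omega>. B n \<omega> $ j)" for j
    by (intro O_p1_nth_bounded_in_prob A_bdd B_bdd; measurable)+
  show "vanishes_in_prob M (\<lambda>n \<omega>. u n \<omega> i + (\<Sum>j\<in>UNIV. H n \<omega> i j * (\<theta>hat n \<omega> - \<theta>) $ j)
      + (1/2) * (\<Sum>j\<in>UNIV. \<Sum>k\<in>UNIV. K n \<omega> i j k * (\<theta>hat n \<omega> - \<theta>) $ j * (\<theta>hat n \<omega> - \<theta>) $ k))" for i
    using tendsto_real_sqrt[OF lim_1_over_n]
    by (intro o_p_imp_vanishes_in_prob_at_rate[OF score_expansion _ rates(1)]) (simp_all add: real_sqrt_divide)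
  show "vanishes_in_prob M
      (\<lambda>n \<omega>. (A n \<omega> - (1 / sqrt (real n)) *\<^sub>R (gi *v (\<chi> i. u n \<omega> i))) $ j / (1 / sqrt (real n)))" for j
    by (intro o_p_imp_vanishes_in_prob o_p_nth A_control rates(1)) measurable
  show "vanishes_in_prob M (\<lambda>n \<omega>.
      ((\<theta>hat n \<omega> - \<theta>) - (1 / sqrt (real n)) *\<^sub>R A n \<omega> - (1 / real n) *\<^sub>R B n \<omega>) $ j / (1 / real n))" for j
    by (intro o_p_imp_vanishes_in_prob o_p_nth expansion rates(2)) measurable
qed (rule meas H_lln K_bounded)+

theorem mainTheorem7:
  fixes M :: "'a measure" and p :: "real^'d::finite \<Rightarrow> 'a \<Rightarrow> real"
    and \<Theta> :: "(real^'d) set" and \<theta> :: "real^'d"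
    and P :: "'w measure" and X :: "nat \<Rightarrow> 'w \<Rightarrow> 'a"
    and \<theta>hat A B :: "nat \<Rightarrow> 'w \<Rightarrow> real^'d"
  assumes model: "stat_model M p \<Theta>"
    and reg: "\<theta> \<in> Theta_reg M p \<Theta>"
    and moments: "moment_conditions M p \<Theta> \<theta>"
    and P: "prob_space P"
    and indep: "prob_space.indep_vars P (\<lambda>_. M) X UNIV"
    and ident: "\<And>t. distr P M (X t) = density M (\<lambda>x. ennreal (p \<theta> x))"
    and meas: "\<And>n. \<theta>hat n \<in> borel_measurable P" "\<And>n. A n \<in> borel_measurable P"
              "\<And>n. B n \<in> borel_measurable P"
    and expansion: "o_p P (\<lambda>n \<omega>. (\<theta>hat n \<omega> - \<theta>) - (1 / sqrt (real n)) *\<^sub>R A n \<omega>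
                                    - (1 / real n) *\<^sub>R B n \<omega>) (\<lambda>n. 1 / real n)"
    and A_bdd: "O_p1 P A" and B_bdd: "O_p1 P B"
    and score_expansion: "\<And>i. o_p P (\<lambda>n \<omega>.
          partial i (loglik p X n \<omega>) \<theta>
          + (\<Sum>j\<in>UNIV. covHess M p (loglik p X n \<omega>) i j \<theta> * (\<theta>hat n \<omega> - \<theta>) $ j)
          + (1/2) * (\<Sum>j\<in>UNIV. \<Sum>k\<in>UNIV. cov3 M p (loglik p X n \<omega>) i j k \<theta>
                                          * (\<theta>hat n \<omega> - \<theta>) $ j * (\<theta>hat n \<omega> - \<theta>) $ k))
          (\<lambda>n. 1 / sqrt (real n))"
    and A_control: "o_p P (\<lambda>n \<omega>. A n \<omega> - (1 / sqrt (real n)) *\<^sub>R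
                             (fisher_inv M p \<theta> *v (\<chi> i. partial i (loglik p X n \<omega>) \<theta>)))
                      (\<lambda>n. 1 / sqrt (real n))"
  shows "\<And>i. o_p P (\<lambda>n \<omega>.
          (fisher M p \<theta> *v B n \<omega>) $ i
          - (\<Sum>j\<in>UNIV. (1 / sqrt (real n)) * (covHess M p (loglik p X n \<omega>) i j \<theta>
                                               + real n * fisher M p \<theta> $ i $ j) * A n \<omega> $ j)
          - (1/2) * (\<Sum>j\<in>UNIV. \<Sum>k\<in>UNIV. (1 / real n) * cov3 M p (loglik p X n \<omega>) i j k \<theta>
                                          * A n \<omega> $ j * A n \<omega> $ k))
          (\<lambda>n. 1)"
proof -
  have stat: "statistical_model M p \<Theta>"
    using model by (rule statistical_model.intro)
  have "\<theta> \<in> \<Theta>"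
    using reg by (simp add: Theta_reg_def)
  then interpret sampled: sampled_model M p \<Theta> P X \<theta>
    using stat P indep ident reg moments statistical_model.p_measurable[OF stat] statistical_model.p_pos[OF stat]
    by (intro sampled_model.intro iid_sample.intro iid_sample_axioms.intro sampled_model_axioms.intro)
       (auto intro: less_imp_le)
  show "?thesis i" for i
    by (rule sampled.second_order_term_identification[OF
          invertible_matrix_inv_right[OF sampled.fisher_invertible, folded fisher_inv_def]
          meas sampled.borel_measurable_loglik_derivatives
          sampled.covHess_loglik_average_plus_fisher_vanishes sampled.cov3_loglik_average_bounded
          expansion A_bdd B_bdd score_expansion A_control])
qed

end
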